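(* Let $\mathcal{H}$ be a finite-dimensional Hilbert space of dimension $D_{\mathcal{H}}$, let $f$, $\mathcal{F}$, $H$ be operators on $\mathcal{H}$, and for real $\beta,\tau$ set $\Phi=e^{-\tau\mathcal{F}}e^{-\beta H}/\mathrm{tr}(e^{-\tau\mathcal{F}}e^{-\beta H})$ (assuming the denominator is nonzero). Then for nonnegative integers $m_1,m_2$ with $m=m_1+m_2$, $$\frac{\partial^{m_2}}{\partial\beta^{m_2}}\frac{\partial^{m_1}}{\partial\tau^{m_1}}\mathrm{tr}(f\Phi)=(-1)^m\,\mathrm{tr}_{\mathcal{H}^{\otimes(m+1)}}\Big(f^{(0)}\mathcal{F}^{(1)}\cdots\mathcal{F}^{(m_1)}\,\Phi^{\otimes(m+1)}\,H^{(m_1+1)}H^{(m_1+2)}\cdots H^{(m)}\Big),$$ and consequently at $\beta=\tau=0$, $$\frac{\partial^{m_2}}{\partial\beta^{m_2}}\frac{\partial^{m_1}}{\partial\tau^{m_1}}\mathrm{tr}(f\Phi)\Big|_{\beta=\tau=0}=(-1)^m\big\langle\!\big\langle f^{(0)}\mathcal{F}^{(1)}\cdots\mathcal{F}^{(m_1)}H^{(m_1+1)}\cdots H^{(m)}\big\rangle\!\big\rangle_{m+1}.$$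
   Context: On $\mathcal{H}^{\otimes(m+1)}=\mathcal{H}_1\otimes\cdots\otimes\mathcal{H}_{m+1}$, $\langle\langle\cdot\rangle\rangle_{q}:=\mathrm{tr}_{\mathcal{H}^{\otimes q}}(\cdot)/\mathrm{tr}_{\mathcal{H}^{\otimes q}}(\hat1)$. For an operator $O$ on $\mathcal{H}$, $O_{\mathcal{H}_s}$ is $O$ acting on the $s$-th copy and identity elsewhere, $O^{(0)}=O_{\mathcal{H}_1}$, $O^{(s)}=O_{\mathcal{H}_1}+\cdots+O_{\mathcal{H}_s}-sO_{\mathcal{H}_{s+1}}$ for $s=1,\dots,m$. *)

theory Defs
  imports "HOL-Analysis.Derivative" "Jordan_Normal_Form.Matrix"
begin

text \<open>Operators on an n-dimensional Hilbert space are complex n x n matrices.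
 Operators on the q-fold tensor power are (n^q) x (n^q) matrices, with the
 tensor (Kronecker) product below (first factor = most significant index).\<close>

definition mtrace :: "complex mat \<Rightarrow> complex" where
  "mtrace A = (\<Sum>i<dim_row A. A $$ (i,i))"

definition kron :: "complex mat \<Rightarrow> complex mat \<Rightarrow> complex mat" where
  "kron A B = mat (dim_row A * dim_row B) (dim_col A * dim_col B)
     (\<lambda>(i,j). A $$ (i div dim_row B, j div dim_col B) * B $$ (i mod dim_row B, j mod dim_col B))"

fun tens_pow :: "nat \<Rightarrow> complex mat \<Rightarrow> complex mat" where
  "tens_pow 0 A = 1\<^sub>m 1"
| "tens_pow (Suc q) A = kron A (tens_pow q A)"

text \<open>O acting on the s-th copy (1-based, 1 \<le> s \<le> q) of H^{\<otimes> q}, identity elsewhere.\<close>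
definition op_on :: "nat \<Rightarrow> nat \<Rightarrow> nat \<Rightarrow> complex mat \<Rightarrow> complex mat" where
  "op_on n q s X = kron (1\<^sub>m (n ^ (s - 1))) (kron X (1\<^sub>m (n ^ (q - s))))"

definition op_sup :: "nat \<Rightarrow> nat \<Rightarrow> nat \<Rightarrow> complex mat \<Rightarrow> complex mat" where
  "op_sup n q s X = (if s = 0 then op_on n q 1 X else
     foldr (+) (map (\<lambda>r. op_on n q r X) [1..<s+1]) (0\<^sub>m (n ^ q) (n ^ q)) - of_nat s \<cdot>\<^sub>m op_on n q (s + 1) X)"

definition mat_prod_list :: "nat \<Rightarrow> complex mat list \<Rightarrow> complex mat" where
  "mat_prod_list N xs = foldr (*) xs (1\<^sub>m N)"

definition mexp :: "complex mat \<Rightarrow> complex mat" where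
  "mexp A = mat (dim_row A) (dim_col A)
     (\<lambda>(i,j). \<Sum>k. (A ^\<^sub>m k) $$ (i,j) / of_nat (fact k))"

definition ntr :: "nat \<Rightarrow> nat \<Rightarrow> complex mat \<Rightarrow> complex" where
  "ntr n q X = mtrace X / mtrace (1\<^sub>m (n ^ q) :: complex mat)"

fun nderiv :: "nat \<Rightarrow> (real \<Rightarrow> complex) \<Rightarrow> real \<Rightarrow> complex" where
  "nderiv 0 g = g"
| "nderiv (Suc k) g = (\<lambda>t. vector_derivative (nderiv k g) (at t))"

definition Phi :: "complex mat \<Rightarrow> complex mat \<Rightarrow> real \<Rightarrow> real \<Rightarrow> complex mat" where
  "Phi F H \<tau> \<beta> = (let M = mexp ((- complex_of_real \<tau>) \<cdot>\<^sub>m F) * mexp ((- complex_of_real \<beta>) \<cdot>\<^sub>m H)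
     in (1 / mtrace M) \<cdot>\<^sub>m M)"

definition op_string :: "nat \<Rightarrow> nat \<Rightarrow> nat \<Rightarrow> complex mat \<Rightarrow> complex mat \<Rightarrow> complex mat \<Rightarrow> complex mat list \<Rightarrow> complex mat" where
  "op_string n m1 m2 f F H mid = (let q = m1 + m2 + 1 in
     mat_prod_list (n ^ q)
       ([op_sup n q 0 f] @ map (\<lambda>s. op_sup n q s F) [1..<m1+1] @ mid
        @ map (\<lambda>s. op_sup n q s H) [m1+1..<m1+m2+1]))"

end

(* Write E = e^(-tau F) e^(-beta H), so that Phi = E / tr E. As F commutes with e^(-tau F),
   both partial derivatives of Phi have the shape
     Phi' = tr (X Phi + Phi Y) Phi - (X Phi + Phi Y),
   with (X, Y) = (F, 0) for tau and (X, Y) = (0, H) for beta. By the Leibniz rule the tensor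
   power T_q = Phi^{otimes q} satisfies T_q' = q c T_q - (X_tot T_q + T_q Y_tot), where
   X_tot = X_1 + ... + X_q, and because tr Phi = 1 the scalar term can be traced over one more
   copy, which gives
     d tr (A T_q) = - tr (((A otimes 1) X^(q) + Y^(q) (A otimes 1)) T_(q+1)).
   Iterating m1 times in tau and then m2 times in beta produces the operator string, except
   that the H^(s) appear in reverse order; being sums of commuting one-copy operators they
   commute, and cyclicity of the trace moves them behind Phi^{otimes (m+1)}. At tau = beta = 0
   Phi is the identity divided by the dimension, which turns the trace into the normalized one. *)

theory Submission
  imports Defs
begin

section \<open>Matrix algebra\<close>

lemma index_mult_mat_sum:
  assumes "A \<in> carrier_mat r k" "B \<in> carrier_mat k c" "i < r" "j < c"
  shows "(A * B) $$ (i,j) = (\<Sum>l<k. A $$ (i,l) * B $$ (l,j))"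
  using assms by (auto simp: scalar_prod_def atLeast0LessThan intro!: sum.cong)

lemma mtrace_mult:
  assumes "A \<in> carrier_mat r c" "B \<in> carrier_mat c r"
  shows "mtrace (A * B) = (\<Sum>i<r. \<Sum>l<c. A $$ (i,l) * B $$ (l,i))"
proof -
  have "mtrace (A * B) = (\<Sum>i<r. (A * B) $$ (i,i))" using assms by (simp add: mtrace_def)
  also have "\<dots> = (\<Sum>i<r. \<Sum>l<c. A $$ (i,l) * B $$ (l,i))"
    by (rule sum.cong[OF refl], rule index_mult_mat_sum[OF assms]) (use assms in auto)
  finally show ?thesis .
qed

lemma mtrace_mult_commute:
  assumes "A \<in> carrier_mat r c" "B \<in> carrier_mat c r"
  shows "mtrace (A * B) = mtrace (B * A)"
  unfolding mtrace_mult[OF assms] mtrace_mult[OF assms(2,1)]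
  by (subst sum.swap) (simp add: mult.commute)

lemma smult_smult_mat: "a \<cdot>\<^sub>m (b \<cdot>\<^sub>m A) = (a * b) \<cdot>\<^sub>m (A :: complex mat)"
  by (rule eq_matI) auto

lemma commute_minus_smult:
  fixes A B C :: "complex mat"
  assumes A: "A \<in> carrier_mat N N" and C: "C \<in> carrier_mat N N" and B: "B \<in> carrier_mat N N"
    and "A * B = B * A" "C * B = B * C"
  shows "(A - c \<cdot>\<^sub>m C) * B = B * (A - c \<cdot>\<^sub>m C)"
proof -
  have "(A - c \<cdot>\<^sub>m C) * B = A * B - c \<cdot>\<^sub>m (C * B)"
    using A B C by (simp add: minus_mult_distrib_mat[of A N N "c \<cdot>\<^sub>m C" B N] mult_smult_assoc_mat)
  moreover have "B * (A - c \<cdot>\<^sub>m C) = B * A - c \<cdot>\<^sub>m (B * C)"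
    using A B C by (simp add: mult_minus_distrib_mat[of B N N A N "c \<cdot>\<^sub>m C"] mult_smult_distrib)
  ultimately show ?thesis using assms by simp
qed

lemma mtrace_add: "A \<in> carrier_mat N N \<Longrightarrow> B \<in> carrier_mat N N \<Longrightarrow> mtrace (A + B) = mtrace A + mtrace B"
  by (simp add: mtrace_def sum.distrib)

lemma mtrace_minus: "A \<in> carrier_mat N N \<Longrightarrow> B \<in> carrier_mat N N \<Longrightarrow> mtrace (A - B) = mtrace A - mtrace B"
  by (simp add: mtrace_def sum_subtractf)

lemma mtrace_uminus: "A \<in> carrier_mat N N \<Longrightarrow> mtrace (- A) = - mtrace A"
  by (auto simp: mtrace_def sum_negf[symmetric] intro!: sum.cong)

lemma mtrace_smult: "A \<in> carrier_mat N N \<Longrightarrow> mtrace (c \<cdot>\<^sub>m A) = c * mtrace A"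
  by (auto simp: mtrace_def sum_distrib_left intro!: sum.cong)

lemma mtrace_one: "mtrace (1\<^sub>m N) = of_nat N"
  by (simp add: mtrace_def)

definition mat_sum :: "nat \<Rightarrow> complex mat list \<Rightarrow> complex mat" where
  "mat_sum N xs = foldr (+) xs (0\<^sub>m N N)"

lemma mat_sum_carrier: "set xs \<subseteq> carrier_mat N N \<Longrightarrow> mat_sum N xs \<in> carrier_mat N N"
  unfolding mat_sum_def by (induction xs) auto

lemma mat_sum_snoc:
  assumes "set xs \<subseteq> carrier_mat N N" "y \<in> carrier_mat N N"
  shows "mat_sum N (xs @ [y]) = mat_sum N xs + y"
  using assms by (induction xs) (auto simp: mat_sum_def mat_sum_carrier[unfolded mat_sum_def])

lemma mat_sum_commute:
  assumes "set xs \<subseteq> carrier_mat N N" "B \<in> carrier_mat N N" "\<forall>x\<in>set xs. x * B = B * x"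
  shows "mat_sum N xs * B = B * mat_sum N xs"
  using assms(1,3)
proof (induction xs)
  case Nil then show ?case using assms(2) by (simp add: mat_sum_def)
next
  case (Cons x xs)
  have "x \<in> carrier_mat N N" "mat_sum N xs \<in> carrier_mat N N"
    using Cons.prems mat_sum_carrier by auto
  then show ?case
    using Cons assms(2) by (simp add: mat_sum_def[of N "x # xs"] mat_sum_def[of N xs, symmetric]
        add_mult_distrib_mat mult_add_distrib_mat)
qed

lemma mat_sum_zero: "mat_sum N (map (\<lambda>x. 0\<^sub>m N N) xs) = 0\<^sub>m N N"
  unfolding mat_sum_def by (induction xs) auto

lemma mat_prod_list_carrier: "set xs \<subseteq> carrier_mat N N \<Longrightarrow> mat_prod_list N xs \<in> carrier_mat N N"
  unfolding mat_prod_list_def by (induction xs) auto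

lemma mat_prod_list_foldr:
  "set xs \<subseteq> carrier_mat N N \<Longrightarrow> B \<in> carrier_mat N N \<Longrightarrow> foldr (*) xs B = mat_prod_list N xs * B"
proof (induction xs)
  case Nil then show ?case by (simp add: mat_prod_list_def)
next
  case (Cons x xs)
  then have "foldr (*) (x # xs) B = x * (mat_prod_list N xs * B)" by simp
  also have "\<dots> = (x * mat_prod_list N xs) * B"
    using Cons.prems by (subst assoc_mult_mat[of _ N N _ N _ N]) (auto intro: mat_prod_list_carrier)
  finally show ?case by (simp add: mat_prod_list_def)
qed

lemma mat_prod_list_append:
  assumes "set xs \<subseteq> carrier_mat N N" "set ys \<subseteq> carrier_mat N N"
  shows "mat_prod_list N (xs @ ys) = mat_prod_list N xs * mat_prod_list N ys"
proof -
  have "mat_prod_list N (xs @ ys) = foldr (*) xs (mat_prod_list N ys)"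
    by (simp add: mat_prod_list_def)
  also have "\<dots> = mat_prod_list N xs * mat_prod_list N ys"
    using assms by (simp add: mat_prod_list_foldr mat_prod_list_carrier)
  finally show ?thesis .
qed

lemma mat_prod_list_snoc:
  "set xs \<subseteq> carrier_mat N N \<Longrightarrow> y \<in> carrier_mat N N \<Longrightarrow>
   mat_prod_list N (xs @ [y]) = mat_prod_list N xs * y"
  using mat_prod_list_append[of xs N "[y]"] by (simp add: mat_prod_list_def)

lemma mat_prod_list_commute:
  assumes B: "B \<in> carrier_mat N N" and "set xs \<subseteq> carrier_mat N N" "\<forall>x\<in>set xs. x * B = B * x"
  shows "mat_prod_list N xs * B = B * mat_prod_list N xs"
  using assms(2,3)
proof (induction xs)
  case Nil then show ?case using B by (simp add: mat_prod_list_def)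
next
  case (Cons x xs)
  have x: "x \<in> carrier_mat N N" and P: "mat_prod_list N xs \<in> carrier_mat N N"
    using Cons.prems mat_prod_list_carrier by auto
  have "(x * mat_prod_list N xs) * B = x * (B * mat_prod_list N xs)"
    using Cons x P B by simp
  also have "\<dots> = (x * B) * mat_prod_list N xs" using x P B by simp
  also have "\<dots> = B * (x * mat_prod_list N xs)" using Cons.prems x P B by simp
  finally show ?case by (simp add: mat_prod_list_def)
qed

section \<open>The Kronecker product\<close>

lemma div_mod_less_mult:
  fixes i :: nat
  assumes "i < a * b"
  shows "i div b < a" "i mod b < b"
  using assms by (auto simp: less_mult_imp_div_less) (metis mod_less_divisor mult_0_right not_less0 not_gr0)

lemma sum_lessThan_mult_div_mod:
  fixes g :: "nat \<Rightarrow> nat \<Rightarrow> 'a::comm_monoid_add"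
  shows "(\<Sum>k<a*b. g (k div b) (k mod b)) = (\<Sum>k1<a. \<Sum>k2<b. g k1 k2)"
proof (induction a)
  case 0 then show ?case by simp
next
  case (Suc a)
  have "(\<Sum>k\<in>{a*b..<a*b+b}. g (k div b) (k mod b)) = (\<Sum>k2<b. g ((a*b+k2) div b) ((a*b+k2) mod b))"
    by (simp add: sum.shift_bounds_nat_ivl[of _ 0 "a*b" b, simplified] lessThan_atLeast0 add.commute)
  also have "\<dots> = (\<Sum>k2<b. g a k2)"
    by (intro sum.cong) auto
  finally have "(\<Sum>k\<in>{a*b..<a*b+b}. g (k div b) (k mod b)) = (\<Sum>k2<b. g a k2)" .
  moreover have "(\<Sum>k<Suc a*b. g (k div b) (k mod b))
      = (\<Sum>k<a*b. g (k div b) (k mod b)) + (\<Sum>k\<in>{a*b..<a*b+b}. g (k div b) (k mod b))"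
    by (simp add: lessThan_atLeast0 sum.atLeastLessThan_concat add.commute)
  ultimately show ?case using Suc by simp
qed

lemma kron_dims [simp]:
  "dim_row (kron A B) = dim_row A * dim_row B" "dim_col (kron A B) = dim_col A * dim_col B"
  by (simp_all add: kron_def)

lemma kron_carrier_mat:
  "A \<in> carrier_mat a b \<Longrightarrow> B \<in> carrier_mat c d \<Longrightarrow> kron A B \<in> carrier_mat (a*c) (b*d)"
  unfolding kron_def carrier_mat_def by auto

lemma index_kron:
  "i < dim_row A * dim_row B \<Longrightarrow> j < dim_col A * dim_col B \<Longrightarrow>
   kron A B $$ (i,j) = A $$ (i div dim_row B, j div dim_col B) * B $$ (i mod dim_row B, j mod dim_col B)"
  by (simp add: kron_def)

lemma mtrace_kron:
  assumes "A \<in> carrier_mat a a" "B \<in> carrier_mat b b"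
  shows "mtrace (kron A B) = mtrace A * mtrace B"
proof -
  have "mtrace (kron A B) = (\<Sum>k<a*b. A $$ (k div b, k div b) * B $$ (k mod b, k mod b))"
    using assms by (auto simp: mtrace_def index_kron intro!: sum.cong)
  also have "\<dots> = (\<Sum>k1<a. \<Sum>k2<b. A $$ (k1,k1) * B $$ (k2,k2))"
    by (rule sum_lessThan_mult_div_mod[of "\<lambda>x y. A $$ (x,x) * B $$ (y,y)"])
  also have "\<dots> = mtrace A * mtrace B"
    using assms by (simp add: mtrace_def sum_product)
  finally show ?thesis .
qed

lemma kron_mult:
  assumes A: "A \<in> carrier_mat a1 a2" and B: "B \<in> carrier_mat b1 b2"
    and C: "C \<in> carrier_mat a2 a3" and D: "D \<in> carrier_mat b2 b3"
  shows "kron A B * kron C D = kron (A * C) (B * D)"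
proof (rule eq_matI)
  fix i j assume "i < dim_row (kron (A * C) (B * D))" "j < dim_col (kron (A * C) (B * D))"
  then have i: "i < a1 * b1" and j: "j < a3 * b3" using assms by auto
  note bounds = div_mod_less_mult[OF i] div_mod_less_mult[OF j]
  have "(kron A B * kron C D) $$ (i,j) = (\<Sum>k<a2*b2. kron A B $$ (i,k) * kron C D $$ (k,j))"
    using i j assms by (intro index_mult_mat_sum kron_carrier_mat) auto
  also have "\<dots> = (\<Sum>k<a2*b2. (A $$ (i div b1, k div b2) * C $$ (k div b2, j div b3))
                               * (B $$ (i mod b1, k mod b2) * D $$ (k mod b2, j mod b3)))"
    using i j assms by (intro sum.cong refl) (auto simp: index_kron div_mod_less_mult)
  also have "\<dots> = (\<Sum>k1<a2. \<Sum>k2<b2. (A $$ (i div b1, k1) * C $$ (k1, j div b3))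
                                     * (B $$ (i mod b1, k2) * D $$ (k2, j mod b3)))"
    by (rule sum_lessThan_mult_div_mod[of "\<lambda>x y. (A $$ (i div b1, x) * C $$ (x, j div b3))
                                                  * (B $$ (i mod b1, y) * D $$ (y, j mod b3))"])
  also have "\<dots> = (A * C) $$ (i div b1, j div b3) * (B * D) $$ (i mod b1, j mod b3)"
    using bounds by (simp add: index_mult_mat_sum[OF A C] index_mult_mat_sum[OF B D] sum_product)
  also have "\<dots> = kron (A * C) (B * D) $$ (i,j)"
    using i j assms by (simp add: index_kron)
  finally show "(kron A B * kron C D) $$ (i,j) = kron (A * C) (B * D) $$ (i,j)" .
qed (use assms in auto)

lemma kron_assoc: "kron (kron A B) C = kron A (kron B C)"
proof (rule eq_matI)
  fix i j assume "i < dim_row (kron A (kron B C))" "j < dim_col (kron A (kron B C))"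
  define b c b' c' where "b = dim_row B" "c = dim_row C" "b' = dim_col B" "c' = dim_col C"
  have i: "i < dim_row A * (b * c)" and j: "j < dim_col A * (b' * c')"
    using \<open>i < _\<close> \<open>j < _\<close> by (auto simp: b_c_b'_c'_def)
  have pos: "0 < c" "0 < c'" using i j by (auto intro!: Nat.gr0I)
  have mod_div: "k mod (x * y) div y = k div y mod x" if "0 < y" for k x y :: nat
    using that mod_mult2_eq[of k y x] by (simp add: mult.commute)
  have "kron (kron A B) C $$ (i,j)
      = A $$ (i div c div b, j div c' div b') * B $$ (i div c mod b, j div c' mod b') * C $$ (i mod c, j mod c')"
    using i j div_mod_less_mult[of i "dim_row A * b" c] div_mod_less_mult[of j "dim_col A * b'" c']
    by (simp add: index_kron b_c_b'_c'_def mult.assoc)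
  also have "\<dots> = A $$ (i div (b*c), j div (b'*c'))
      * (B $$ (i mod (b*c) div c, j mod (b'*c') div c') * C $$ (i mod (b*c) mod c, j mod (b'*c') mod c'))"
    using pos by (simp add: div_mult2_eq[symmetric] mult.commute[of c] mult.commute[of c'] mod_div
        mod_mod_cancel mult.assoc)
  also have "\<dots> = kron A (kron B C) $$ (i,j)"
    using i j div_mod_less_mult[OF i] div_mod_less_mult[OF j]
    by (simp add: index_kron b_c_b'_c'_def)
  finally show "kron (kron A B) C $$ (i,j) = kron A (kron B C) $$ (i,j)" .
qed (auto simp: mult.assoc)

lemma kron_one_one: "kron (1\<^sub>m a) (1\<^sub>m b) = 1\<^sub>m (a*b)"
proof (rule eq_matI)
  fix i j assume "i < dim_row (1\<^sub>m (a*b) :: complex mat)" "j < dim_col (1\<^sub>m (a*b) :: complex mat)"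
  then have i: "i < a*b" and j: "j < a*b" by auto
  have "(i div b = j div b \<and> i mod b = j mod b) = (i = j)"
    by (metis div_mult_mod_eq)
  then show "kron (1\<^sub>m a) (1\<^sub>m b) $$ (i,j) = 1\<^sub>m (a*b) $$ (i,j)"
    using i j div_mod_less_mult[OF i] div_mod_less_mult[OF j] by (auto simp: index_kron)
qed auto

lemma kron_one_left [simp]: "kron (1\<^sub>m 1) A = A" "kron (1\<^sub>m (Suc 0)) A = A"
  and kron_one_right [simp]: "kron A (1\<^sub>m 1) = A" "kron A (1\<^sub>m (Suc 0)) = A"
  by (rule eq_matI; auto simp: index_kron)+

lemma kron_add_left:
  "A \<in> carrier_mat a b \<Longrightarrow> B \<in> carrier_mat a b \<Longrightarrow> kron (A + B) C = kron A C + kron B C"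
  and kron_add_right:
  "A \<in> carrier_mat a b \<Longrightarrow> B \<in> carrier_mat a b \<Longrightarrow> kron C (A + B) = kron C A + kron C B"
  and kron_diff_left:
  "A \<in> carrier_mat a b \<Longrightarrow> B \<in> carrier_mat a b \<Longrightarrow> kron (A - B) C = kron A C - kron B C"
  and kron_diff_right:
  "A \<in> carrier_mat a b \<Longrightarrow> B \<in> carrier_mat a b \<Longrightarrow> kron C (A - B) = kron C A - kron C B"
  by (rule eq_matI; auto simp: index_kron div_mod_less_mult algebra_simps)+

lemma kron_smult_left: "kron (c \<cdot>\<^sub>m A) B = c \<cdot>\<^sub>m kron A B"
  and kron_smult_right: "kron A (c \<cdot>\<^sub>m B) = c \<cdot>\<^sub>m kron A B"
  and kron_zero_left: "kron (0\<^sub>m a b) B = 0\<^sub>m (a * dim_row B) (b * dim_col B)"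
  and kron_zero_right: "kron A (0\<^sub>m a b) = 0\<^sub>m (dim_row A * a) (dim_col A * b)"
  by (rule eq_matI; auto simp: index_kron div_mod_less_mult)+

lemma mtrace_kron_mult:
  assumes "A \<in> carrier_mat a a" "B \<in> carrier_mat b b" "C \<in> carrier_mat a a" "D \<in> carrier_mat b b"
  shows "mtrace (kron A B * kron C D) = mtrace (A * C) * mtrace (B * D)"
  using assms by (simp add: kron_mult mtrace_kron[of _ a _ b])

lemma kron_mult_commute:
  assumes "A \<in> carrier_mat a a" "C \<in> carrier_mat a a" "B \<in> carrier_mat b b" "D \<in> carrier_mat b b"
    "A * C = C * A" "B * D = D * B"
  shows "kron A B * kron C D = kron C D * kron A B"
  using assms by (simp add: kron_mult)

lemma kron_mat_sum_left:
  assumes "set xs \<subseteq> carrier_mat N N" "C \<in> carrier_mat m m"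
  shows "kron (mat_sum N xs) C = mat_sum (N * m) (map (\<lambda>x. kron x C) xs)"
  using assms(1)
proof (induction xs)
  case Nil then show ?case using assms(2) by (simp add: mat_sum_def kron_zero_left)
next
  case (Cons x xs)
  then have "kron (mat_sum N (x # xs)) C = kron x C + kron (mat_sum N xs) C"
    by (simp add: mat_sum_def[of N "x # xs"] mat_sum_def[of N xs, symmetric] kron_add_left[OF _ mat_sum_carrier])
  then show ?case using Cons by (simp add: mat_sum_def)
qed

section \<open>Operators acting on single tensor factors\<close>

lemma power_split_at:
  assumes "1 \<le> r" "r \<le> q"
  shows "n^(r-1) * (n * n^(q-r)) = (n::nat)^q"
proof -
  have "(r-1) + (1 + (q-r)) = q" using assms by arith
  then show ?thesis by (metis power_add power_one_right)
qed

lemma op_on_carrier: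
  assumes "X \<in> carrier_mat n n" "1 \<le> r" "r \<le> q"
  shows "op_on n q r X \<in> carrier_mat (n^q) (n^q)"
  using kron_carrier_mat[OF one_carrier_mat[of "n^(r-1)"] kron_carrier_mat[OF assms(1) one_carrier_mat[of "n^(q-r)"]]]
  unfolding op_on_def power_split_at[OF assms(2,3)] .

lemma op_on_zero:
  assumes "1 \<le> r" "r \<le> q"
  shows "op_on n q r (0\<^sub>m n n) = 0\<^sub>m (n^q) (n^q)"
  using power_split_at[OF assms] by (simp add: op_on_def kron_zero_left kron_zero_right)

lemma op_on_last: "op_on n (Suc q) (Suc q) X = kron (1\<^sub>m (n^q)) X"
  by (simp add: op_on_def)

lemma op_on_lift:
  assumes "1 \<le> r" "r \<le> q"
  shows "kron (op_on n q r X) (1\<^sub>m (n^j)) = op_on n (q+j) r X"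
proof -
  have "n^(q-r) * n^j = n^(q+j-r)" using assms by (simp add: power_add[symmetric])
  then show ?thesis
    by (simp add: op_on_def kron_assoc kron_one_one)
qed

lemma op_on_commute:
  assumes X: "X \<in> carrier_mat n n" and Y: "Y \<in> carrier_mat n n" and r: "1 \<le> r" "r < r'" "r' \<le> q"
  shows "op_on n q r X * op_on n q r' Y = op_on n q r' Y * op_on n q r X"
proof -
  define a c d where "a = n^(r-1)" "c = n^(r'-r-1)" "d = n^(q-r')"
  have "q - r = (r'-r-1) + (1 + (q-r'))" "r' - 1 = (r-1) + (1 + (r'-r-1))" using r by arith+
  then have e1: "n^(q-r) = c * (n * d)" and e2: "n^(r'-1) = a * (n * c)"
    unfolding a_c_d_def by (metis power_add power_one_right)+
  have o1: "op_on n q r X = kron (1\<^sub>m a) (kron X (kron (1\<^sub>m c) (kron (1\<^sub>m n) (1\<^sub>m d))))"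
    unfolding op_on_def e1 by (simp add: kron_one_one a_c_d_def)
  have o2: "op_on n q r' Y = kron (1\<^sub>m a) (kron (1\<^sub>m n) (kron (1\<^sub>m c) (kron Y (1\<^sub>m d))))"
    unfolding op_on_def e2 by (simp add: kron_one_one[symmetric] kron_assoc a_c_d_def)
  show ?thesis
    unfolding o1 o2 using X Y by (intro kron_mult_commute kron_carrier_mat) auto
qed

lemma op_on_self_commute:
  assumes "X \<in> carrier_mat n n" "1 \<le> r" "r \<le> q" "1 \<le> r'" "r' \<le> q"
  shows "op_on n q r X * op_on n q r' X = op_on n q r' X * op_on n q r X"
  using op_on_commute[OF assms(1,1), of r r' q] op_on_commute[OF assms(1,1), of r' r q] assms(2-)
  by (cases r r' rule: linorder_cases) auto

definition op_sum :: "nat \<Rightarrow> nat \<Rightarrow> nat \<Rightarrow> complex mat \<Rightarrow> complex mat" where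
  "op_sum n q s X = mat_sum (n^q) (map (\<lambda>r. op_on n q r X) [1..<s+1])"

lemma op_sup_op_sum: "1 \<le> s \<Longrightarrow> op_sup n q s X = op_sum n q s X - of_nat s \<cdot>\<^sub>m op_on n q (s+1) X"
  by (simp add: op_sup_def op_sum_def mat_sum_def)

lemma op_sum_carrier: "X \<in> carrier_mat n n \<Longrightarrow> s \<le> q \<Longrightarrow> op_sum n q s X \<in> carrier_mat (n^q) (n^q)"
  unfolding op_sum_def by (rule mat_sum_carrier) (auto intro!: op_on_carrier)

lemma op_sum_lift:
  assumes "X \<in> carrier_mat n n" "s \<le> q"
  shows "kron (op_sum n q s X) (1\<^sub>m (n^j)) = op_sum n (q+j) s X"
proof -
  have "kron (op_sum n q s X) (1\<^sub>m (n^j))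
      = mat_sum (n^q * n^j) (map (\<lambda>x. kron x (1\<^sub>m (n^j))) (map (\<lambda>r. op_on n q r X) [1..<s+1]))"
    using assms unfolding op_sum_def by (intro kron_mat_sum_left) (auto intro!: op_on_carrier)
  also have "map (\<lambda>x. kron x (1\<^sub>m (n^j))) (map (\<lambda>r. op_on n q r X) [1..<s+1])
      = map (\<lambda>r. op_on n (q+j) r X) [1..<s+1]"
    using assms by (auto simp: op_on_lift)
  finally show ?thesis by (simp add: op_sum_def power_add)
qed

lemma op_sum_Suc:
  assumes "X \<in> carrier_mat n n"
  shows "op_sum n (Suc q) (Suc q) X = kron (op_sum n q q X) (1\<^sub>m n) + kron (1\<^sub>m (n^q)) X"
proof -
  have upt: "[1..<Suc q + 1] = [1..<q+1] @ [Suc q]" by simp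
  have "op_sum n (Suc q) (Suc q) X = op_sum n (Suc q) q X + op_on n (Suc q) (Suc q) X"
    unfolding op_sum_def upt map_append list.map
    by (rule mat_sum_snoc) (use assms in \<open>auto simp del: power_Suc intro!: op_on_carrier\<close>)
  then show ?thesis
    using op_sum_lift[OF assms, of q q 1] by (simp add: op_on_last)
qed

lemma op_sup_Suc:
  assumes "X \<in> carrier_mat n n" "1 \<le> q"
  shows "op_sup n (Suc q) q X = kron (op_sum n q q X) (1\<^sub>m n) - of_nat q \<cdot>\<^sub>m kron (1\<^sub>m (n^q)) X"
  using assms op_sum_lift[OF assms(1), of q q 1] by (simp add: op_sup_op_sum op_on_last)

lemma op_sup_carrier:
  assumes "X \<in> carrier_mat n n" "s < q"
  shows "op_sup n q s X \<in> carrier_mat (n^q) (n^q)"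
proof (cases "s = 0")
  case True then show ?thesis using assms by (simp add: op_sup_def op_on_carrier)
next
  case False then show ?thesis
    using assms by (auto simp: op_sup_op_sum intro!: minus_carrier_mat smult_carrier_mat op_on_carrier)
qed

lemma op_sup_lift:
  assumes "X \<in> carrier_mat n n" "s < q"
  shows "kron (op_sup n q s X) (1\<^sub>m (n^j)) = op_sup n (q+j) s X"
proof (cases "s = 0")
  case True then show ?thesis using assms by (simp add: op_sup_def op_on_lift)
next
  case False
  have "op_sum n q s X \<in> carrier_mat (n^q) (n^q)" "of_nat s \<cdot>\<^sub>m op_on n q (s+1) X \<in> carrier_mat (n^q) (n^q)"
    using assms by (auto intro!: op_sum_carrier op_on_carrier smult_carrier_mat)
  then show ?thesis
    using False assms
    by (simp add: op_sup_op_sum kron_diff_left kron_smult_left op_sum_lift op_on_lift)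
qed

lemma op_sup_zero:
  assumes "s < q"
  shows "op_sup n q s (0\<^sub>m n n) = 0\<^sub>m (n^q) (n^q)"
proof (cases "s = 0")
  case True then show ?thesis using assms by (simp add: op_sup_def op_on_zero)
next
  case False
  have "map (\<lambda>r. op_on n q r (0\<^sub>m n n)) [1..<s+1] = map (\<lambda>r. 0\<^sub>m (n^q) (n^q)) [1..<s+1]"
    using assms by (auto simp: op_on_zero)
  then have "op_sum n q s (0\<^sub>m n n) = 0\<^sub>m (n^q) (n^q)"
    unfolding op_sum_def by (simp only: mat_sum_zero)
  then show ?thesis
    using False assms by (simp add: op_sup_op_sum op_on_zero)
qed

lemma op_on_op_sup_commute:
  assumes X: "X \<in> carrier_mat n n" and r: "1 \<le> r" "r \<le> q" and s: "1 \<le> s" "s < q"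
  shows "op_sup n q s X * op_on n q r X = op_on n q r X * op_sup n q s X"
  unfolding op_sup_op_sum[OF s(1)] op_sum_def
proof (rule commute_minus_smult)
  show "mat_sum (n^q) (map (\<lambda>r. op_on n q r X) [1..<s+1]) * op_on n q r X
      = op_on n q r X * mat_sum (n^q) (map (\<lambda>r. op_on n q r X) [1..<s+1])"
    using X r s by (intro mat_sum_commute) (auto intro!: op_on_carrier op_on_self_commute)
qed (use X r s in \<open>auto intro!: op_on_carrier op_on_self_commute mat_sum_carrier\<close>)

lemma op_sup_commute:
  assumes X: "X \<in> carrier_mat n n" and s: "1 \<le> s" "s < q" and s': "1 \<le> s'" "s' < q"
  shows "op_sup n q s X * op_sup n q s' X = op_sup n q s' X * op_sup n q s X"
  unfolding op_sup_op_sum[OF s(1)] op_sum_def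
proof (rule commute_minus_smult)
  show "mat_sum (n^q) (map (\<lambda>r. op_on n q r X) [1..<s+1]) * op_sup n q s' X
      = op_sup n q s' X * mat_sum (n^q) (map (\<lambda>r. op_on n q r X) [1..<s+1])"
    using X s s' by (intro mat_sum_commute) (auto simp: op_on_op_sup_commute intro!: op_on_carrier op_sup_carrier)
qed (use X s s' in \<open>auto simp: op_on_op_sup_commute intro!: op_on_carrier op_sup_carrier mat_sum_carrier\<close>)

section \<open>Derivatives of matrix-valued functions\<close>

definition has_mat_derivative :: "nat \<Rightarrow> nat \<Rightarrow> (real \<Rightarrow> complex mat) \<Rightarrow> complex mat \<Rightarrow> real \<Rightarrow> bool" where
  "has_mat_derivative r c P P' t \<longleftrightarrow> (\<forall>s. P s \<in> carrier_mat r c) \<and> P' \<in> carrier_mat r c \<and>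
     (\<forall>i<r. \<forall>j<c. ((\<lambda>s. P s $$ (i,j)) has_vector_derivative P' $$ (i,j)) (at t))"

lemma has_mat_derivativeD:
  assumes "has_mat_derivative r c P P' t"
  shows "\<And>s. P s \<in> carrier_mat r c" "P' \<in> carrier_mat r c"
    "\<And>i j. i < r \<Longrightarrow> j < c \<Longrightarrow> ((\<lambda>s. P s $$ (i,j)) has_vector_derivative P' $$ (i,j)) (at t)"
  using assms unfolding has_mat_derivative_def by auto

lemma has_mat_derivative_const: "A \<in> carrier_mat r c \<Longrightarrow> has_mat_derivative r c (\<lambda>s. A) (0\<^sub>m r c) t"
  unfolding has_mat_derivative_def by auto

lemma has_mat_derivative_mult:
  assumes P: "has_mat_derivative r k P P' t" and Q: "has_mat_derivative k c Q Q' t"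
  shows "has_mat_derivative r c (\<lambda>s. P s * Q s) (P t * Q' + P' * Q t) t"
  unfolding has_mat_derivative_def
proof (intro conjI allI impI)
  note cP = has_mat_derivativeD(1,2)[OF P] and cQ = has_mat_derivativeD(1,2)[OF Q]
  show "P s * Q s \<in> carrier_mat r c" for s using cP cQ by (meson mult_carrier_mat)
  show "P t * Q' + P' * Q t \<in> carrier_mat r c" using cP cQ by (meson add_carrier_mat mult_carrier_mat)
  fix i j assume i: "i < r" and j: "j < c"
  have "((\<lambda>s. \<Sum>l<k. P s $$ (i,l) * Q s $$ (l,j)) has_vector_derivative
      (\<Sum>l<k. P t $$ (i,l) * Q' $$ (l,j) + P' $$ (i,l) * Q t $$ (l,j))) (at t)"
    using i j by (intro has_vector_derivative_sum has_vector_derivative_mult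
        has_mat_derivativeD(3)[OF P] has_mat_derivativeD(3)[OF Q]) auto
  moreover have "(\<lambda>s. (P s * Q s) $$ (i,j)) = (\<lambda>s. \<Sum>l<k. P s $$ (i,l) * Q s $$ (l,j))"
    using index_mult_mat_sum[OF cP(1) cQ(1) i j] by auto
  moreover have "(P t * Q' + P' * Q t) $$ (i,j) = (P t * Q') $$ (i,j) + (P' * Q t) $$ (i,j)"
    using i j carrier_matD[OF cP(2)] carrier_matD[OF cQ(1)] by (subst index_add_mat) auto
  ultimately show "((\<lambda>s. (P s * Q s) $$ (i,j)) has_vector_derivative (P t * Q' + P' * Q t) $$ (i,j)) (at t)"
    by (simp add: index_mult_mat_sum[OF cP(1) cQ(2) i j] index_mult_mat_sum[OF cP(2) cQ(1) i j]
        sum.distrib)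
qed

lemma has_mat_derivative_smult:
  assumes f: "(f has_vector_derivative f') (at t)" and P: "has_mat_derivative r c P P' t"
  shows "has_mat_derivative r c (\<lambda>s. f s \<cdot>\<^sub>m P s) (f t \<cdot>\<^sub>m P' + f' \<cdot>\<^sub>m P t) t"
  unfolding has_mat_derivative_def
proof (intro conjI allI impI)
  note cP = has_mat_derivativeD(1,2)[OF P]
  show "f s \<cdot>\<^sub>m P s \<in> carrier_mat r c" for s using cP by simp
  show "f t \<cdot>\<^sub>m P' + f' \<cdot>\<^sub>m P t \<in> carrier_mat r c" using cP by simp
  fix i j assume ij: "i < r" "j < c"
  have "(\<lambda>s. (f s \<cdot>\<^sub>m P s) $$ (i,j)) = (\<lambda>s. f s * P s $$ (i,j))"
    using ij carrier_matD[OF cP(1)] by auto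
  moreover have "(f t \<cdot>\<^sub>m P' + f' \<cdot>\<^sub>m P t) $$ (i,j) = f t * P' $$ (i,j) + f' * P t $$ (i,j)"
    using ij carrier_matD[OF cP(1)] carrier_matD[OF cP(2)] by (subst index_add_mat) auto
  ultimately show "((\<lambda>s. (f s \<cdot>\<^sub>m P s) $$ (i,j)) has_vector_derivative (f t \<cdot>\<^sub>m P' + f' \<cdot>\<^sub>m P t) $$ (i,j)) (at t)"
    using has_vector_derivative_mult[OF f has_mat_derivativeD(3)[OF P ij]] by simp
qed

lemma has_mat_derivative_kron:
  assumes P: "has_mat_derivative r1 c1 P P' t" and Q: "has_mat_derivative r2 c2 Q Q' t"
  shows "has_mat_derivative (r1*r2) (c1*c2) (\<lambda>s. kron (P s) (Q s)) (kron (P t) Q' + kron P' (Q t)) t"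
  unfolding has_mat_derivative_def
proof (intro conjI allI impI)
  note cP = has_mat_derivativeD(1,2)[OF P] and cQ = has_mat_derivativeD(1,2)[OF Q]
  note dims = carrier_matD[OF cP(1)] carrier_matD[OF cP(2)] carrier_matD[OF cQ(1)] carrier_matD[OF cQ(2)]
  show "kron (P s) (Q s) \<in> carrier_mat (r1*r2) (c1*c2)" for s using cP cQ by (meson kron_carrier_mat)
  show "kron (P t) Q' + kron P' (Q t) \<in> carrier_mat (r1*r2) (c1*c2)"
    using cP cQ by (meson add_carrier_mat kron_carrier_mat)
  fix i j assume i: "i < r1*r2" and j: "j < c1*c2"
  have "((\<lambda>s. P s $$ (i div r2, j div c2) * Q s $$ (i mod r2, j mod c2)) has_vector_derivative
     P t $$ (i div r2, j div c2) * Q' $$ (i mod r2, j mod c2) + P' $$ (i div r2, j div c2) * Q t $$ (i mod r2, j mod c2)) (at t)"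
    using div_mod_less_mult[OF i] div_mod_less_mult[OF j]
    by (intro has_vector_derivative_mult has_mat_derivativeD(3)[OF P] has_mat_derivativeD(3)[OF Q])
  moreover have "(\<lambda>s. kron (P s) (Q s) $$ (i,j)) = (\<lambda>s. P s $$ (i div r2, j div c2) * Q s $$ (i mod r2, j mod c2))"
    using dims i j by (auto simp: index_kron)
  ultimately show "((\<lambda>s. kron (P s) (Q s) $$ (i,j)) has_vector_derivative (kron (P t) Q' + kron P' (Q t)) $$ (i,j)) (at t)"
    using dims i j by (simp add: index_kron)
qed

lemma has_mat_derivative_mtrace:
  assumes P: "has_mat_derivative r r P P' t"
  shows "((\<lambda>s. mtrace (P s)) has_vector_derivative mtrace P') (at t)"
proof -
  note cP = has_mat_derivativeD(1,2)[OF P]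
  have "(\<lambda>s. mtrace (P s)) = (\<lambda>s. \<Sum>i<r. P s $$ (i,i))"
    using carrier_matD[OF cP(1)] by (auto simp: mtrace_def)
  then show ?thesis
    using cP by (auto simp: mtrace_def intro!: has_vector_derivative_sum has_mat_derivativeD(3)[OF P])
qed

lemma open_mtrace_nonzero:
  assumes "\<And>t. has_mat_derivative r r M (M' t) t"
  shows "open {t. mtrace (M t) \<noteq> 0}"
proof -
  have "continuous_on UNIV (\<lambda>s. mtrace (M s))"
    using has_mat_derivative_mtrace[OF assms]
    by (intro continuous_on_vector_derivative) (auto intro: has_vector_derivative_at_within)
  then show ?thesis using open_Collect_neq[of "\<lambda>s. mtrace (M s)" "\<lambda>s. 0"] by simp
qed

lemma nderiv_eq_on_open:
  assumes U: "open U" "t \<in> U" and g: "\<And>t. t \<in> U \<Longrightarrow> g t = G 0 t"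
    and G: "\<And>k t. t \<in> U \<Longrightarrow> (G k has_vector_derivative G (Suc k) t) (at t)"
  shows "nderiv k g t = G k t"
  using U(2)
proof (induction k arbitrary: t)
  case 0 then show ?case using g by simp
next
  case (Suc k)
  have "(nderiv k g has_vector_derivative G (Suc k) t) (at t)"
    by (rule has_vector_derivative_transform_within_open[OF G[OF Suc.prems] U(1) Suc.prems])
       (simp add: Suc.IH)
  then show ?case by (simp add: vector_derivative_at)
qed

section \<open>The matrix exponential\<close>

lemma pow_mat_smult:
  fixes A :: "complex mat"
  assumes A: "A \<in> carrier_mat n n"
  shows "(z \<cdot>\<^sub>m A) ^\<^sub>m k = z^k \<cdot>\<^sub>m (A ^\<^sub>m k)"
proof (induction k)
  case (Suc k)
  have "(z^k \<cdot>\<^sub>m A ^\<^sub>m k) * (z \<cdot>\<^sub>m A) = z^Suc k \<cdot>\<^sub>m (A ^\<^sub>m k * A)"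
    using A by (simp add: mult_smult_assoc_mat[of _ n n] mult_smult_distrib[of _ n n] smult_smult_mat
        mult.commute)
  then show ?case using Suc by simp
qed (use A in \<open>auto intro!: eq_matI\<close>)

lemma pow_mat_Suc_left:
  fixes A :: "complex mat"
  assumes A: "A \<in> carrier_mat n n"
  shows "A ^\<^sub>m Suc k = A * A ^\<^sub>m k"
proof (induction k)
  case (Suc k)
  have "A ^\<^sub>m Suc (Suc k) = (A * A ^\<^sub>m k) * A" using Suc by simp
  also have "\<dots> = A * (A ^\<^sub>m k * A)" using A by (intro assoc_mult_mat) auto
  finally show ?case by simp
qed (use A in simp)

lemma norm_index_pow_mat_le:
  fixes A :: "complex mat"
  assumes A: "A \<in> carrier_mat n n" and ij: "i < n" "j < n"
  shows "norm ((A ^\<^sub>m k) $$ (i,j)) \<le> (\<Sum>i<n. \<Sum>j<n. norm (A $$ (i,j))) ^ k"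
  using ij
proof (induction k arbitrary: j)
  case 0 then show ?case using A by auto
next
  case (Suc k)
  define N where "N = (\<Sum>i<n. \<Sum>j<n. norm (A $$ (i,j)))"
  have N0: "0 \<le> N" unfolding N_def by (intro sum_nonneg) auto
  have col: "(\<Sum>l<n. norm (A $$ (l,j))) \<le> N"
    unfolding N_def using Suc.prems by (subst sum.swap) (intro member_le_sum sum_nonneg, auto)
  have "norm ((A ^\<^sub>m Suc k) $$ (i,j)) = norm (\<Sum>l<n. (A ^\<^sub>m k) $$ (i,l) * A $$ (l,j))"
    using index_mult_mat_sum[OF pow_carrier_mat[OF A] A Suc.prems, of k] by simp
  also have "\<dots> \<le> (\<Sum>l<n. norm ((A ^\<^sub>m k) $$ (i,l)) * norm (A $$ (l,j)))"
    by (rule order_trans[OF norm_sum]) (simp add: norm_mult)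
  also have "\<dots> \<le> (\<Sum>l<n. N ^ k * norm (A $$ (l,j)))"
    using Suc unfolding N_def by (intro sum_mono mult_right_mono) auto
  also have "\<dots> \<le> N ^ k * N"
    using col N0 by (simp add: sum_distrib_left[symmetric] mult_left_mono)
  finally show ?case by (simp add: N_def mult.commute)
qed

definition exp_series :: "complex mat \<Rightarrow> nat \<Rightarrow> nat \<Rightarrow> complex \<Rightarrow> complex" where
  "exp_series A i j z = (\<Sum>k. (A ^\<^sub>m k) $$ (i,j) / of_nat (fact k) * z^k)"

lemma exp_series_summable:
  fixes A :: "complex mat" and z :: complex
  assumes A: "A \<in> carrier_mat n n" and ij: "i < n" "j < n"
  shows "summable (\<lambda>k. (A ^\<^sub>m k) $$ (i,j) / of_nat (fact k) * z^k)"
proof (rule summable_comparison_test')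
  define N where "N = (\<Sum>i<n. \<Sum>j<n. norm (A $$ (i,j)))"
  show "summable (\<lambda>k. inverse (fact k) * (N * norm z)^k :: real)" by (rule summable_exp)
  fix k
  have "norm ((A ^\<^sub>m k) $$ (i,j) / of_nat (fact k) * z^k) = norm ((A ^\<^sub>m k) $$ (i,j)) / fact k * norm z ^ k"
    by (simp add: norm_mult norm_divide norm_power)
  also have "\<dots> \<le> N ^ k / fact k * norm z ^ k"
    using norm_index_pow_mat_le[OF A ij, of k] unfolding N_def
    by (intro mult_right_mono divide_right_mono) auto
  finally show "norm ((A ^\<^sub>m k) $$ (i,j) / of_nat (fact k) * z^k) \<le> inverse (fact k) * (N * norm z)^k"
    by (simp add: power_mult_distrib field_simps)
qed

lemma index_mexp_smult:
  assumes "A \<in> carrier_mat n n" "i < n" "j < n"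
  shows "mexp (z \<cdot>\<^sub>m A) $$ (i,j) = exp_series A i j z"
  using assms by (simp add: mexp_def exp_series_def pow_mat_smult mult.commute)

lemma mexp_carrier: "A \<in> carrier_mat n n \<Longrightarrow> mexp A \<in> carrier_mat n n"
  unfolding mexp_def carrier_mat_def by auto

lemma exp_series_has_field_derivative:
  assumes A: "A \<in> carrier_mat n n" and ij: "i < n" "j < n"
  shows "(exp_series A i j has_field_derivative (\<Sum>k. (A ^\<^sub>m Suc k) $$ (i,j) / of_nat (fact k) * z^k)) (at z)"
proof -
  have "diffs (\<lambda>k. (A ^\<^sub>m k) $$ (i,j) / of_nat (fact k)) = (\<lambda>k. (A ^\<^sub>m Suc k) $$ (i,j) / of_nat (fact k))"
    by (rule ext) (simp add: diffs_def del: pow_mat.simps of_nat_Suc)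
  then show ?thesis
    using termdiffs_strong_converges_everywhere[OF exp_series_summable[OF A ij]]
    by (simp add: exp_series_def[abs_def] del: pow_mat.simps)
qed

lemma exp_series_mult_right:
  assumes A: "A \<in> carrier_mat n n" and B: "B \<in> carrier_mat n n" and ij: "i < n" "j < n"
  shows "(\<Sum>l<n. exp_series A i l z * B $$ (l,j)) = (\<Sum>k. (A ^\<^sub>m k * B) $$ (i,j) / of_nat (fact k) * z^k)"
proof -
  have "(\<Sum>l<n. exp_series A i l z * B $$ (l,j))
      = (\<Sum>l<n. \<Sum>k. (A ^\<^sub>m k) $$ (i,l) / of_nat (fact k) * z^k * B $$ (l,j))"
    unfolding exp_series_def using exp_series_summable[OF A ij(1)] by (intro sum.cong refl suminf_mult2) auto
  also have "\<dots> = (\<Sum>k. \<Sum>l<n. (A ^\<^sub>m k) $$ (i,l) / of_nat (fact k) * z^k * B $$ (l,j))"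
    using exp_series_summable[OF A ij(1)] by (intro suminf_sum[symmetric] summable_mult2) auto
  also have "\<dots> = (\<Sum>k. (A ^\<^sub>m k * B) $$ (i,j) / of_nat (fact k) * z^k)"
    using ij by (simp add: index_mult_mat_sum[OF pow_carrier_mat[OF A] B] divide_inverse
        sum_distrib_left sum_distrib_right mult_ac)
  finally show ?thesis .
qed

lemma exp_series_mult_left:
  assumes A: "A \<in> carrier_mat n n" and B: "B \<in> carrier_mat n n" and ij: "i < n" "j < n"
  shows "(\<Sum>l<n. B $$ (i,l) * exp_series A l j z) = (\<Sum>k. (B * A ^\<^sub>m k) $$ (i,j) / of_nat (fact k) * z^k)"
proof -
  have "(\<Sum>l<n. B $$ (i,l) * exp_series A l j z)
      = (\<Sum>l<n. \<Sum>k. B $$ (i,l) * ((A ^\<^sub>m k) $$ (l,j) / of_nat (fact k) * z^k))"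
    unfolding exp_series_def using exp_series_summable[OF A _ ij(2)]
    by (intro sum.cong refl suminf_mult[symmetric]) auto
  also have "\<dots> = (\<Sum>k. \<Sum>l<n. B $$ (i,l) * ((A ^\<^sub>m k) $$ (l,j) / of_nat (fact k) * z^k))"
    using exp_series_summable[OF A _ ij(2)] by (intro suminf_sum[symmetric] summable_mult) auto
  also have "\<dots> = (\<Sum>k. (B * A ^\<^sub>m k) $$ (i,j) / of_nat (fact k) * z^k)"
    using ij by (simp add: index_mult_mat_sum[OF B pow_carrier_mat[OF A]] divide_inverse
        sum_distrib_left sum_distrib_right mult_ac)
  finally show ?thesis .
qed

lemma exp_series_has_field_derivative_mexp:
  assumes A: "A \<in> carrier_mat n n" and ij: "i < n" "j < n"
  shows "(exp_series A i j has_field_derivative (A * mexp (z \<cdot>\<^sub>m A)) $$ (i,j)) (at z)"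
    and "(exp_series A i j has_field_derivative (mexp (z \<cdot>\<^sub>m A) * A) $$ (i,j)) (at z)"
proof -
  have "(A * mexp (z \<cdot>\<^sub>m A)) $$ (i,j) = (\<Sum>l<n. A $$ (i,l) * exp_series A l j z)"
    using index_mult_mat_sum[OF A mexp_carrier ij] index_mexp_smult[OF A] ij by (simp add: A)
  then show "(exp_series A i j has_field_derivative (A * mexp (z \<cdot>\<^sub>m A)) $$ (i,j)) (at z)"
    using exp_series_has_field_derivative[OF A ij]
    by (simp add: exp_series_mult_left[OF A A ij] pow_mat_Suc_left[OF A] del: pow_mat.simps)
  have "(mexp (z \<cdot>\<^sub>m A) * A) $$ (i,j) = (\<Sum>l<n. exp_series A i l z * A $$ (l,j))"
    using index_mult_mat_sum[OF mexp_carrier A ij] index_mexp_smult[OF A] ij by (simp add: A)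
  then show "(exp_series A i j has_field_derivative (mexp (z \<cdot>\<^sub>m A) * A) $$ (i,j)) (at z)"
    using exp_series_has_field_derivative[OF A ij] by (simp add: exp_series_mult_right[OF A A ij])
qed

abbreviation exp_neg :: "complex mat \<Rightarrow> real \<Rightarrow> complex mat" where
  "exp_neg A t \<equiv> mexp ((- complex_of_real t) \<cdot>\<^sub>m A)"

lemma exp_neg_carrier: "A \<in> carrier_mat n n \<Longrightarrow> exp_neg A t \<in> carrier_mat n n"
  using mexp_carrier[of "(- complex_of_real t) \<cdot>\<^sub>m A" n] by simp

lemma exp_neg_has_mat_derivative:
  assumes A: "A \<in> carrier_mat n n"
  shows "has_mat_derivative n n (exp_neg A) (- (A * exp_neg A t)) t"
    and "has_mat_derivative n n (exp_neg A) (- (exp_neg A t * A)) t"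
proof -
  have neg: "((\<lambda>s. - complex_of_real s) has_vector_derivative -1) (at t)"
    using has_vector_derivative_minus[OF has_vector_derivative_of_real[OF DERIV_ident]] by simp
  have entry: "(\<lambda>s. exp_neg A s $$ (i,j)) = exp_series A i j \<circ> (\<lambda>s. - complex_of_real s)"
    if "i < n" "j < n" for i j using index_mexp_smult[OF A that] by auto
  show "has_mat_derivative n n (exp_neg A) (- (A * exp_neg A t)) t"
    unfolding has_mat_derivative_def
  proof (intro conjI allI impI)
    fix i j assume ij: "i < n" "j < n"
    show "((\<lambda>s. exp_neg A s $$ (i,j)) has_vector_derivative (- (A * exp_neg A t)) $$ (i,j)) (at t)"
      unfolding entry[OF ij]
      using field_vector_diff_chain_at[OF neg exp_series_has_field_derivative_mexp(1)[OF A ij]] ij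
      by (simp add: carrier_matD[OF A] carrier_matD[OF exp_neg_carrier[OF A]])
  qed (use A exp_neg_carrier[OF A] in \<open>auto intro!: mult_carrier_mat\<close>)
  show "has_mat_derivative n n (exp_neg A) (- (exp_neg A t * A)) t"
    unfolding has_mat_derivative_def
  proof (intro conjI allI impI)
    fix i j assume ij: "i < n" "j < n"
    show "((\<lambda>s. exp_neg A s $$ (i,j)) has_vector_derivative (- (exp_neg A t * A)) $$ (i,j)) (at t)"
      unfolding entry[OF ij]
      using field_vector_diff_chain_at[OF neg exp_series_has_field_derivative_mexp(2)[OF A ij]] ij
      by (simp add: carrier_matD[OF A] carrier_matD[OF exp_neg_carrier[OF A]])
  qed (use A exp_neg_carrier[OF A] in \<open>auto intro!: mult_carrier_mat\<close>)
qed

lemma exp_neg_zero: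
  assumes A: "A \<in> carrier_mat n n"
  shows "exp_neg A 0 = 1\<^sub>m n"
proof (rule eq_matI)
  fix i j assume "i < dim_row (1\<^sub>m n :: complex mat)" "j < dim_col (1\<^sub>m n :: complex mat)"
  then have ij: "i < n" "j < n" by auto
  have "exp_neg A 0 $$ (i,j) = exp_series A i j 0" using index_mexp_smult[OF A ij, of 0] by simp
  also have "\<dots> = (A ^\<^sub>m 0) $$ (i,j) / of_nat (fact 0)" unfolding exp_series_def by (rule powser_zero)
  finally show "exp_neg A 0 $$ (i,j) = 1\<^sub>m n $$ (i,j)" using A ij by simp
qed (use A in \<open>auto simp: mexp_def\<close>)

section \<open>The derivatives of the state \<open>\<Phi>\<close>\<close>

lemma Phi_eq: "Phi F H t b = (1 / mtrace (exp_neg F t * exp_neg H b)) \<cdot>\<^sub>m (exp_neg F t * exp_neg H b)"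
  by (simp add: Phi_def Let_def)

lemma Phi_carrier: "F \<in> carrier_mat n n \<Longrightarrow> H \<in> carrier_mat n n \<Longrightarrow> Phi F H t b \<in> carrier_mat n n"
  unfolding Phi_eq using exp_neg_carrier by (metis mult_carrier_mat smult_carrier_mat)

lemma mtrace_Phi:
  assumes "F \<in> carrier_mat n n" "H \<in> carrier_mat n n" "mtrace (exp_neg F t * exp_neg H b) \<noteq> 0"
  shows "mtrace (Phi F H t b) = 1"
  using assms exp_neg_carrier[of F n t] exp_neg_carrier[of H n b]
  by (simp add: Phi_eq mtrace_smult[of _ n])

lemma has_vector_derivative_inverse:
  fixes Z :: "real \<Rightarrow> complex"
  assumes "(Z has_vector_derivative Z') (at t)" "Z t \<noteq> 0"
  shows "((\<lambda>s. 1 / Z s) has_vector_derivative - Z' / Z t ^ 2) (at t)"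
proof -
  have "((inverse \<circ> Z) has_vector_derivative Z' * - (inverse (Z t) ^ Suc (Suc 0))) (at t)"
    by (rule field_vector_diff_chain_at[OF assms(1) DERIV_inverse[OF assms(2)]])
  moreover have "inverse \<circ> Z = (\<lambda>s. 1 / Z s)" by (auto simp: inverse_eq_divide)
  ultimately show ?thesis by (simp add: field_simps power2_eq_square)
qed

text \<open>Both derivatives of \<open>\<Phi>\<close> are of this form: \<open>X = F, Y = 0\<close> for \<open>\<tau>\<close> and \<open>X = 0, Y = H\<close> for \<open>\<beta>\<close>.\<close>
lemma has_mat_derivative_normalize:
  assumes M: "has_mat_derivative n n M (- (X * M t + M t * Y)) t"
    and X: "X \<in> carrier_mat n n" and Y: "Y \<in> carrier_mat n n" and Z: "mtrace (M t) \<noteq> 0"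
  defines "N \<equiv> (1 / mtrace (M t)) \<cdot>\<^sub>m M t"
  shows "has_mat_derivative n n (\<lambda>s. (1 / mtrace (M s)) \<cdot>\<^sub>m M s)
           (mtrace (X * N + N * Y) \<cdot>\<^sub>m N - (X * N + N * Y)) t"
proof -
  define W where "W = X * M t + M t * Y"
  have cM: "M t \<in> carrier_mat n n" using has_mat_derivativeD(1)[OF M] .
  have cW: "W \<in> carrier_mat n n" unfolding W_def using X Y cM by auto
  have "((\<lambda>s. mtrace (M s)) has_vector_derivative - mtrace W) (at t)"
    using has_mat_derivative_mtrace[OF M] cW by (simp add: W_def mtrace_uminus[of _ n])
  from has_vector_derivative_inverse[OF this Z]
  have "has_mat_derivative n n (\<lambda>s. (1 / mtrace (M s)) \<cdot>\<^sub>m M s)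
      ((1 / mtrace (M t)) \<cdot>\<^sub>m (- W) + (mtrace W / mtrace (M t) ^ 2) \<cdot>\<^sub>m M t) t"
    using has_mat_derivative_smult[OF _ M] unfolding W_def by simp
  moreover have "X * N + N * Y = (1 / mtrace (M t)) \<cdot>\<^sub>m W"
    unfolding N_def W_def using X Y cM
    by (simp add: mult_smult_distrib[OF X cM] mult_smult_assoc_mat[OF cM Y]
        add_smult_distrib_left_mat[of "X * M t" n n])
  moreover have "(1 / mtrace (M t)) \<cdot>\<^sub>m (- W) + (mtrace W / mtrace (M t) ^ 2) \<cdot>\<^sub>m M t
      = mtrace ((1 / mtrace (M t)) \<cdot>\<^sub>m W) \<cdot>\<^sub>m N - (1 / mtrace (M t)) \<cdot>\<^sub>m W"
    unfolding N_def mtrace_smult[OF cW]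
    by (rule eq_matI) (use Z in \<open>simp_all add: carrier_matD[OF cW] carrier_matD[OF cM] power2_eq_square\<close>)
  ultimately show ?thesis by simp
qed

lemma has_mat_derivative_exp_neg_mult_tau:
  assumes F: "F \<in> carrier_mat n n" and H: "H \<in> carrier_mat n n"
  shows "has_mat_derivative n n (\<lambda>s. exp_neg F s * exp_neg H b) (- (F * (exp_neg F t * exp_neg H b))) t"
proof -
  note cF = exp_neg_carrier[OF F, of t] and cH = exp_neg_carrier[OF H, of b]
  have "has_mat_derivative n n (\<lambda>s. exp_neg F s * exp_neg H b)
      (exp_neg F t * 0\<^sub>m n n + - (F * exp_neg F t) * exp_neg H b) t"
    by (rule has_mat_derivative_mult[OF exp_neg_has_mat_derivative(1)[OF F] has_mat_derivative_const[OF cH]])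
  moreover have "exp_neg F t * 0\<^sub>m n n + - (F * exp_neg F t) * exp_neg H b = - (F * (exp_neg F t * exp_neg H b))"
    using F cF cH by (simp add: carrier_matD[OF cF] carrier_matD[OF F])
  ultimately show ?thesis by simp
qed

lemma has_mat_derivative_exp_neg_mult_beta:
  assumes F: "F \<in> carrier_mat n n" and H: "H \<in> carrier_mat n n"
  shows "has_mat_derivative n n (\<lambda>s. exp_neg F t * exp_neg H s) (- ((exp_neg F t * exp_neg H b) * H)) b"
proof -
  note cF = exp_neg_carrier[OF F, of t] and cH = exp_neg_carrier[OF H, of b]
  have "has_mat_derivative n n (\<lambda>s. exp_neg F t * exp_neg H s)
      (exp_neg F t * - (exp_neg H b * H) + 0\<^sub>m n n * exp_neg H b) b"
    by (rule has_mat_derivative_mult[OF has_mat_derivative_const[OF cF] exp_neg_has_mat_derivative(2)[OF H]])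
  moreover have "exp_neg F t * - (exp_neg H b * H) + 0\<^sub>m n n * exp_neg H b = - ((exp_neg F t * exp_neg H b) * H)"
    using H cF cH by (simp add: carrier_matD[OF cF] carrier_matD[OF cH] carrier_matD[OF H])
  ultimately show ?thesis by simp
qed

lemma Phi_has_derivative_tau:
  assumes F: "F \<in> carrier_mat n n" and H: "H \<in> carrier_mat n n"
    and Z: "mtrace (exp_neg F t * exp_neg H b) \<noteq> 0"
  shows "has_mat_derivative n n (\<lambda>s. Phi F H s b)
           (mtrace (F * Phi F H t b) \<cdot>\<^sub>m Phi F H t b - F * Phi F H t b) t"
proof -
  have "has_mat_derivative n n (\<lambda>s. exp_neg F s * exp_neg H b)
      (- (F * (exp_neg F t * exp_neg H b) + (exp_neg F t * exp_neg H b) * 0\<^sub>m n n)) t"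
    using has_mat_derivative_exp_neg_mult_tau[OF F H, of b t]
      mult_carrier_mat[OF F mult_carrier_mat[OF exp_neg_carrier[OF F, of t] exp_neg_carrier[OF H, of b]]]
    by (simp add: carrier_matD[OF exp_neg_carrier[OF F]] carrier_matD[OF exp_neg_carrier[OF H]])
  from has_mat_derivative_normalize[OF this F zero_carrier_mat Z]
  show ?thesis
    using carrier_matD[OF Phi_carrier[OF F H, of t b]] mult_carrier_mat[OF F Phi_carrier[OF F H, of t b]]
    by (simp add: Phi_eq[symmetric])
qed

lemma Phi_has_derivative_beta:
  assumes F: "F \<in> carrier_mat n n" and H: "H \<in> carrier_mat n n"
    and Z: "mtrace (exp_neg F t * exp_neg H b) \<noteq> 0"
  shows "has_mat_derivative n n (\<lambda>s. Phi F H t s)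
           (mtrace (Phi F H t b * H) \<cdot>\<^sub>m Phi F H t b - Phi F H t b * H) b"
proof -
  have "has_mat_derivative n n (\<lambda>s. exp_neg F t * exp_neg H s)
      (- (0\<^sub>m n n * (exp_neg F t * exp_neg H b) + (exp_neg F t * exp_neg H b) * H)) b"
    using has_mat_derivative_exp_neg_mult_beta[OF F H, of t b]
      mult_carrier_mat[OF mult_carrier_mat[OF exp_neg_carrier[OF F, of t] exp_neg_carrier[OF H, of b]] H]
    by (simp add: carrier_matD[OF exp_neg_carrier[OF F]] carrier_matD[OF exp_neg_carrier[OF H]])
  from has_mat_derivative_normalize[OF this zero_carrier_mat H Z]
  show ?thesis
    using carrier_matD[OF Phi_carrier[OF F H, of t b]] mult_carrier_mat[OF Phi_carrier[OF F H, of t b] H]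
    by (simp add: Phi_eq[symmetric])
qed

section \<open>Tensor powers of \<open>\<Phi>\<close>\<close>

lemma tens_pow_carrier: "A \<in> carrier_mat n n \<Longrightarrow> tens_pow q A \<in> carrier_mat (n^q) (n^q)"
  by (induction q) (auto dest: kron_carrier_mat)

lemma tens_pow_Suc_right: "tens_pow (Suc q) A = kron (tens_pow q A) A"
proof (induction q)
  case (Suc q)
  have "tens_pow (Suc (Suc q)) A = kron A (kron (tens_pow q A) A)" using Suc by simp
  then show ?case by (simp add: kron_assoc)
qed simp

lemma tens_pow_smult_one: "tens_pow q (c \<cdot>\<^sub>m 1\<^sub>m n) = c^q \<cdot>\<^sub>m 1\<^sub>m (n^q)"
proof (induction q)
  case (Suc q)
  then show ?case
    by (simp add: kron_smult_left kron_smult_right kron_one_one smult_smult_mat mult.commute)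
qed (rule eq_matI, auto)

lemma op_sum_Suc_mult:
  assumes Z: "Z \<in> carrier_mat n n" and K: "K \<in> carrier_mat (n^Suc q) (n^Suc q)"
  shows "op_sum n (Suc q) (Suc q) Z * K = kron (op_sum n q q Z) (1\<^sub>m n) * K + kron (1\<^sub>m (n^q)) Z * K"
    and "K * op_sum n (Suc q) (Suc q) Z = K * kron (op_sum n q q Z) (1\<^sub>m n) + K * kron (1\<^sub>m (n^q)) Z"
proof -
  have c1: "kron (op_sum n q q Z) (1\<^sub>m n) \<in> carrier_mat (n^Suc q) (n^Suc q)"
    using kron_carrier_mat[OF op_sum_carrier[OF Z, of q q] one_carrier_mat[of n]] by (simp add: mult.commute)
  have c2: "kron (1\<^sub>m (n^q)) Z \<in> carrier_mat (n^Suc q) (n^Suc q)"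
    using kron_carrier_mat[OF one_carrier_mat[of "n^q"] Z] by (simp add: mult.commute)
  show "op_sum n (Suc q) (Suc q) Z * K = kron (op_sum n q q Z) (1\<^sub>m n) * K + kron (1\<^sub>m (n^q)) Z * K"
    unfolding op_sum_Suc[OF Z] by (rule add_mult_distrib_mat[OF c1 c2 K])
  show "K * op_sum n (Suc q) (Suc q) Z = K * kron (op_sum n q q Z) (1\<^sub>m n) + K * kron (1\<^sub>m (n^q)) Z"
    unfolding op_sum_Suc[OF Z] by (rule mult_add_distrib_mat[OF K c1 c2])
qed

lemma kron_tens_pow_derivative_Suc:
  assumes X: "X \<in> carrier_mat n n" and Y: "Y \<in> carrier_mat n n"
    and T: "T \<in> carrier_mat (n^q) (n^q)" and P: "P \<in> carrier_mat n n"
  shows "kron T (c \<cdot>\<^sub>m P - (X * P + P * Y))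
         + kron ((of_nat q * c) \<cdot>\<^sub>m T - (op_sum n q q X * T + T * op_sum n q q Y)) P
       = (of_nat (Suc q) * c) \<cdot>\<^sub>m kron T P
         - (op_sum n (Suc q) (Suc q) X * kron T P + kron T P * op_sum n (Suc q) (Suc q) Y)"
proof -
  define K GX GY where "K = kron T P" and "GX = op_sum n q q X" and "GY = op_sum n q q Y"
  have cGX: "GX \<in> carrier_mat (n^q) (n^q)" and cGY: "GY \<in> carrier_mat (n^q) (n^q)"
    unfolding GX_def GY_def using X Y by (auto intro: op_sum_carrier)
  have cK: "K \<in> carrier_mat (n^Suc q) (n^Suc q)"
    unfolding K_def using kron_carrier_mat[OF T P] by (simp add: mult.commute)
  have "kron T (c \<cdot>\<^sub>m P - (X * P + P * Y)) = c \<cdot>\<^sub>m K - (kron T (X * P) + kron T (P * Y))"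
    unfolding K_def using X Y T P
    by (simp add: kron_diff_right[of _ n n] kron_add_right[of _ n n] kron_smult_right)
  also have "kron T (X * P) = kron (1\<^sub>m (n^q)) X * K"
    unfolding K_def using kron_mult[OF one_carrier_mat X T P] T by simp
  also have "kron T (P * Y) = K * kron (1\<^sub>m (n^q)) Y"
    unfolding K_def using kron_mult[OF T P one_carrier_mat Y] T by simp
  finally have dP: "kron T (c \<cdot>\<^sub>m P - (X * P + P * Y))
      = c \<cdot>\<^sub>m K - (kron (1\<^sub>m (n^q)) X * K + K * kron (1\<^sub>m (n^q)) Y)" .
  have "kron ((of_nat q * c) \<cdot>\<^sub>m T - (GX * T + T * GY)) P
      = (of_nat q * c) \<cdot>\<^sub>m K - (kron (GX * T) P + kron (T * GY) P)"
    unfolding K_def using T P cGX cGY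
    by (simp add: kron_diff_left[of _ "n^q" "n^q"] kron_add_left[of _ "n^q" "n^q"] kron_smult_left)
  also have "kron (GX * T) P = kron GX (1\<^sub>m n) * K"
    unfolding K_def using kron_mult[OF cGX one_carrier_mat T P] P by simp
  also have "kron (T * GY) P = K * kron GY (1\<^sub>m n)"
    unfolding K_def using kron_mult[OF T P cGY one_carrier_mat] P by simp
  finally have dT: "kron ((of_nat q * c) \<cdot>\<^sub>m T - (GX * T + T * GY)) P
      = (of_nat q * c) \<cdot>\<^sub>m K - (kron GX (1\<^sub>m n) * K + K * kron GY (1\<^sub>m n))" .
  show ?thesis
    unfolding K_def[symmetric] GX_def[symmetric] GY_def[symmetric] dP dT
      op_sum_Suc_mult[OF X cK] op_sum_Suc_mult[OF Y cK]
    using X Y T P cK cGX cGY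
    by (intro eq_matI) (auto simp: kron_carrier_mat mult.commute algebra_simps)
qed

lemma tens_pow_has_mat_derivative:
  assumes X: "X \<in> carrier_mat n n" and Y: "Y \<in> carrier_mat n n"
    and P: "has_mat_derivative n n \<Phi> (c \<cdot>\<^sub>m \<Phi> t - (X * \<Phi> t + \<Phi> t * Y)) t"
  shows "has_mat_derivative (n^q) (n^q) (\<lambda>s. tens_pow q (\<Phi> s))
           ((of_nat q * c) \<cdot>\<^sub>m tens_pow q (\<Phi> t)
            - (op_sum n q q X * tens_pow q (\<Phi> t) + tens_pow q (\<Phi> t) * op_sum n q q Y)) t"
proof (induction q)
  case 0
  have "0\<^sub>m 1 1 = (of_nat 0 * c) \<cdot>\<^sub>m tens_pow 0 (\<Phi> t)
      - (op_sum n 0 0 X * tens_pow 0 (\<Phi> t) + tens_pow 0 (\<Phi> t) * op_sum n 0 0 Y)"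
    by (rule eq_matI) (auto simp: op_sum_def mat_sum_def)
  then show ?case using has_mat_derivative_const[of "1\<^sub>m 1" 1 1] by simp
next
  case (Suc q)
  note cP = has_mat_derivativeD(1)[OF P, of t]
  have "(\<lambda>s. tens_pow (Suc q) (\<Phi> s)) = (\<lambda>s. kron (tens_pow q (\<Phi> s)) (\<Phi> s))"
    by (simp only: tens_pow_Suc_right)
  moreover have "n^Suc q = n^q * n" by simp
  ultimately show ?case
    using has_mat_derivative_kron[OF Suc.IH P]
    unfolding kron_tens_pow_derivative_Suc[OF X Y tens_pow_carrier[OF cP] cP] tens_pow_Suc_right[symmetric]
    by (simp only:)
qed

lemma mtrace_kron_minus_mult:
  assumes U: "U \<in> carrier_mat N N" and V: "V \<in> carrier_mat N N" and T: "T \<in> carrier_mat N N"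
    and W: "W \<in> carrier_mat n n" and P: "P \<in> carrier_mat n n"
  shows "mtrace ((kron U (1\<^sub>m n) - a \<cdot>\<^sub>m kron V W) * kron T P)
       = mtrace (U * T) * mtrace P - a * (mtrace (V * T) * mtrace (W * P))"
proof -
  have cU: "kron U (1\<^sub>m n) \<in> carrier_mat (N*n) (N*n)" and cV: "kron V W \<in> carrier_mat (N*n) (N*n)"
    and cT: "kron T P \<in> carrier_mat (N*n) (N*n)"
    using U V W T P by (auto intro!: kron_carrier_mat)
  have "(kron U (1\<^sub>m n) - a \<cdot>\<^sub>m kron V W) * kron T P = kron U (1\<^sub>m n) * kron T P - a \<cdot>\<^sub>m (kron V W * kron T P)"
    using cU cV cT by (simp add: minus_mult_distrib_mat[of _ "N*n" "N*n"] mult_smult_assoc_mat)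
  then show ?thesis
    using cU cV cT U V T W P
    by (simp add: mtrace_minus[of _ "N*n"] mtrace_smult[of _ "N*n"] mtrace_kron_mult[of _ N _ n])
qed

lemma kron_one_mult_op_sup:
  assumes A: "A \<in> carrier_mat (n^q) (n^q)" and X: "X \<in> carrier_mat n n" and q: "1 \<le> q"
  shows "kron A (1\<^sub>m n) * op_sup n (Suc q) q X = kron (A * op_sum n q q X) (1\<^sub>m n) - of_nat q \<cdot>\<^sub>m kron A X"
    and "op_sup n (Suc q) q X * kron A (1\<^sub>m n) = kron (op_sum n q q X * A) (1\<^sub>m n) - of_nat q \<cdot>\<^sub>m kron A X"
proof -
  note G = op_sum_carrier[OF X, of q q]
  have c: "kron A (1\<^sub>m n) \<in> carrier_mat (n^q*n) (n^q*n)" "kron (op_sum n q q X) (1\<^sub>m n) \<in> carrier_mat (n^q*n) (n^q*n)"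
    "kron (1\<^sub>m (n^q)) X \<in> carrier_mat (n^q*n) (n^q*n)"
    using A X G by (auto intro!: kron_carrier_mat)
  show "kron A (1\<^sub>m n) * op_sup n (Suc q) q X = kron (A * op_sum n q q X) (1\<^sub>m n) - of_nat q \<cdot>\<^sub>m kron A X"
    unfolding op_sup_Suc[OF X q] using c A X G
    by (simp add: mult_minus_distrib_mat[of _ "n^q*n" "n^q*n"] mult_smult_distrib
        kron_mult[OF A one_carrier_mat G one_carrier_mat] kron_mult[OF A one_carrier_mat one_carrier_mat X])
  show "op_sup n (Suc q) q X * kron A (1\<^sub>m n) = kron (op_sum n q q X * A) (1\<^sub>m n) - of_nat q \<cdot>\<^sub>m kron A X"
    unfolding op_sup_Suc[OF X q] using c A X G
    by (simp add: minus_mult_distrib_mat[of _ "n^q*n" "n^q*n"] mult_smult_assoc_mat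
        kron_mult[OF G one_carrier_mat A one_carrier_mat] kron_mult[OF one_carrier_mat X A one_carrier_mat])
qed

lemma mtrace_mult_smult_minus:
  assumes A: "A \<in> carrier_mat N N" and T: "T \<in> carrier_mat N N"
    and G: "G \<in> carrier_mat N N" and G': "G' \<in> carrier_mat N N"
  shows "mtrace (A * (a \<cdot>\<^sub>m T - (G * T + T * G'))) = a * mtrace (A * T) - (mtrace (A * G * T) + mtrace (G' * A * T))"
proof -
  have "A * (a \<cdot>\<^sub>m T - (G * T + T * G')) = a \<cdot>\<^sub>m (A * T) - (A * G * T + A * (T * G'))"
    using assms by (simp add: mult_minus_distrib_mat[of A N N _ N] mult_add_distrib_mat[of A N N _ N]
        mult_smult_distrib)
  moreover have "mtrace (A * (T * G')) = mtrace (G' * A * T)"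
    using assms mtrace_mult_commute[of "A * T" N N G'] by simp
  ultimately show ?thesis
    using assms by (simp add: mtrace_minus[of _ N] mtrace_add[of _ N] mtrace_smult[of _ N])
qed

lemma mtrace_op_sup_Suc_mult_kron:
  assumes X: "X \<in> carrier_mat n n" and Y: "Y \<in> carrier_mat n n" and A: "A \<in> carrier_mat (n^q) (n^q)"
    and q: "1 \<le> q" and T: "T \<in> carrier_mat (n^q) (n^q)" and P: "P \<in> carrier_mat n n"
  shows "mtrace ((kron A (1\<^sub>m n) * op_sup n (Suc q) q X + op_sup n (Suc q) q Y * kron A (1\<^sub>m n)) * kron T P)
       = (mtrace (A * op_sum n q q X * T) + mtrace (op_sum n q q Y * A * T)) * mtrace P
         - of_nat q * mtrace (A * T) * (mtrace (X * P) + mtrace (Y * P))"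
proof -
  have cAG: "A * op_sum n q q X \<in> carrier_mat (n^q) (n^q)" "op_sum n q q Y * A \<in> carrier_mat (n^q) (n^q)"
    using A op_sum_carrier[OF X, of q q] op_sum_carrier[OF Y, of q q] by auto
  have c: "kron A (1\<^sub>m n) * op_sup n (Suc q) q X \<in> carrier_mat (n^q*n) (n^q*n)"
    "op_sup n (Suc q) q Y * kron A (1\<^sub>m n) \<in> carrier_mat (n^q*n) (n^q*n)"
    "kron T P \<in> carrier_mat (n^q*n) (n^q*n)"
    using A X Y T P unfolding kron_one_mult_op_sup[OF A X q] kron_one_mult_op_sup[OF A Y q]
    by (auto intro!: kron_carrier_mat minus_carrier_mat smult_carrier_mat)
  show ?thesis
    unfolding add_mult_distrib_mat[OF c] mtrace_add[OF mult_carrier_mat[OF c(1,3)] mult_carrier_mat[OF c(2,3)]]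
    unfolding kron_one_mult_op_sup[OF A X q] kron_one_mult_op_sup[OF A Y q]
    using mtrace_kron_minus_mult[OF cAG(1) A T X P] mtrace_kron_minus_mult[OF cAG(2) A T Y P]
    by (simp add: algebra_simps)
qed

text \<open>The scalar term \<open>q c tr (A \<Phi>\<^sup>\<otimes>\<^sup>q)\<close> of the derivative is absorbed into the traces over \<open>q + 1\<close>
  copies, using \<open>tr \<Phi> = 1\<close>; this is where the terms \<open>- q X\<^sub>q\<^sub>+\<^sub>1\<close> of \<open>X\<^sup>(\<^sup>q\<^sup>)\<close> come from.\<close>
lemma mtrace_tens_pow_has_vector_derivative:
  assumes X: "X \<in> carrier_mat n n" and Y: "Y \<in> carrier_mat n n"
    and A: "A \<in> carrier_mat (n^q) (n^q)" and q: "1 \<le> q"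
    and P: "has_mat_derivative n n \<Phi> (mtrace (X * \<Phi> t + \<Phi> t * Y) \<cdot>\<^sub>m \<Phi> t - (X * \<Phi> t + \<Phi> t * Y)) t"
    and tr: "mtrace (\<Phi> t) = 1"
  shows "((\<lambda>s. mtrace (A * tens_pow q (\<Phi> s))) has_vector_derivative
           - mtrace ((kron A (1\<^sub>m n) * op_sup n (Suc q) q X + op_sup n (Suc q) q Y * kron A (1\<^sub>m n))
                     * tens_pow (Suc q) (\<Phi> t))) (at t)"
proof -
  define c T GX GY where "c = mtrace (X * \<Phi> t + \<Phi> t * Y)" and "T = tens_pow q (\<Phi> t)"
    and "GX = op_sum n q q X" and "GY = op_sum n q q Y"
  note cP = has_mat_derivativeD(1)[OF P, of t]
  have cT: "T \<in> carrier_mat (n^q) (n^q)" unfolding T_def using tens_pow_carrier[OF cP] .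
  have cGX: "GX \<in> carrier_mat (n^q) (n^q)" and cGY: "GY \<in> carrier_mat (n^q) (n^q)"
    unfolding GX_def GY_def using X Y by (auto intro: op_sum_carrier)
  have "has_mat_derivative (n^q) (n^q) (\<lambda>s. A * tens_pow q (\<Phi> s))
      (A * ((of_nat q * c) \<cdot>\<^sub>m T - (GX * T + T * GY)) + 0\<^sub>m (n^q) (n^q) * T) t"
    using has_mat_derivative_mult[OF has_mat_derivative_const[OF A] tens_pow_has_mat_derivative[OF X Y P]]
    unfolding c_def T_def GX_def GY_def .
  moreover have "A * ((of_nat q * c) \<cdot>\<^sub>m T - (GX * T + T * GY)) \<in> carrier_mat (n^q) (n^q)"
    using mult_carrier_mat[OF cGX cT] mult_carrier_mat[OF cT cGY]
    by (intro mult_carrier_mat[OF A] minus_carrier_mat) simp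
  ultimately have "((\<lambda>s. mtrace (A * tens_pow q (\<Phi> s))) has_vector_derivative
      mtrace (A * ((of_nat q * c) \<cdot>\<^sub>m T - (GX * T + T * GY)))) (at t)"
    using has_mat_derivative_mtrace cT by simp
  moreover have "c = mtrace (X * \<Phi> t) + mtrace (Y * \<Phi> t)"
    unfolding c_def using X Y cP mtrace_mult_commute[OF Y cP] by (simp add: mtrace_add[of _ n])
  then have "mtrace (A * ((of_nat q * c) \<cdot>\<^sub>m T - (GX * T + T * GY)))
      = - mtrace ((kron A (1\<^sub>m n) * op_sup n (Suc q) q X + op_sup n (Suc q) q Y * kron A (1\<^sub>m n)) * kron T (\<Phi> t))"
    unfolding mtrace_mult_smult_minus[OF A cT cGX cGY] mtrace_op_sup_Suc_mult_kron[OF X Y A q cT cP]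
    using tr by (simp add: GX_def GY_def algebra_simps)
  ultimately show ?thesis
    unfolding T_def tens_pow_Suc_right by simp
qed

lemma mtrace_tens_pow_has_vector_derivative_left:
  assumes X: "X \<in> carrier_mat n n" and A: "A \<in> carrier_mat (n^q) (n^q)" and q: "1 \<le> q"
    and P: "has_mat_derivative n n \<Phi> (mtrace (X * \<Phi> t) \<cdot>\<^sub>m \<Phi> t - X * \<Phi> t) t"
    and tr: "mtrace (\<Phi> t) = 1"
  shows "((\<lambda>s. mtrace (A * tens_pow q (\<Phi> s))) has_vector_derivative
           - mtrace (kron A (1\<^sub>m n) * op_sup n (Suc q) q X * tens_pow (Suc q) (\<Phi> t))) (at t)"
proof -
  note cP = has_mat_derivativeD(1)[OF P, of t]
  have "kron A (1\<^sub>m n) \<in> carrier_mat (n^Suc q) (n^Suc q)"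
    using kron_carrier_mat[OF A one_carrier_mat[of n]] by (simp add: mult.commute)
  moreover have "has_mat_derivative n n \<Phi>
      (mtrace (X * \<Phi> t + \<Phi> t * 0\<^sub>m n n) \<cdot>\<^sub>m \<Phi> t - (X * \<Phi> t + \<Phi> t * 0\<^sub>m n n)) t"
    using P mult_carrier_mat[OF X cP] by (simp add: carrier_matD[OF cP])
  ultimately show ?thesis
    using mtrace_tens_pow_has_vector_derivative[where \<Phi> = \<Phi> and t = t, OF X zero_carrier_mat A q _ tr]
      mult_carrier_mat[OF _ op_sup_carrier[OF X, of q "Suc q"], of "kron A (1\<^sub>m n)"]
    by (simp add: op_sup_zero left_mult_zero_mat del: tens_pow.simps)
qed

lemma mtrace_tens_pow_has_vector_derivative_right:
  assumes Y: "Y \<in> carrier_mat n n" and A: "A \<in> carrier_mat (n^q) (n^q)" and q: "1 \<le> q"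
    and P: "has_mat_derivative n n \<Phi> (mtrace (\<Phi> t * Y) \<cdot>\<^sub>m \<Phi> t - \<Phi> t * Y) t"
    and tr: "mtrace (\<Phi> t) = 1"
  shows "((\<lambda>s. mtrace (A * tens_pow q (\<Phi> s))) has_vector_derivative
           - mtrace (op_sup n (Suc q) q Y * kron A (1\<^sub>m n) * tens_pow (Suc q) (\<Phi> t))) (at t)"
proof -
  note cP = has_mat_derivativeD(1)[OF P, of t]
  have "kron A (1\<^sub>m n) \<in> carrier_mat (n^Suc q) (n^Suc q)"
    using kron_carrier_mat[OF A one_carrier_mat[of n]] by (simp add: mult.commute)
  moreover have "has_mat_derivative n n \<Phi>
      (mtrace (0\<^sub>m n n * \<Phi> t + \<Phi> t * Y) \<cdot>\<^sub>m \<Phi> t - (0\<^sub>m n n * \<Phi> t + \<Phi> t * Y)) t"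
    using P mult_carrier_mat[OF cP Y] by (simp add: carrier_matD[OF cP])
  ultimately show ?thesis
    using mtrace_tens_pow_has_vector_derivative[where \<Phi> = \<Phi> and t = t, OF zero_carrier_mat Y A q _ tr]
      mult_carrier_mat[OF op_sup_carrier[OF Y, of q "Suc q"], of "kron A (1\<^sub>m n)"]
    by (simp add: op_sup_zero right_mult_zero_mat del: tens_pow.simps)
qed

section \<open>Operator strings\<close>

definition tau_string :: "nat \<Rightarrow> nat \<Rightarrow> nat \<Rightarrow> complex mat \<Rightarrow> complex mat \<Rightarrow> complex mat" where
  "tau_string n q k f F = mat_prod_list (n^q) ([op_sup n q 0 f] @ map (\<lambda>s. op_sup n q s F) [1..<k+1])"

definition beta_string :: "nat \<Rightarrow> nat \<Rightarrow> nat \<Rightarrow> nat \<Rightarrow> complex mat \<Rightarrow> complex mat" where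
  "beta_string n q k j H = mat_prod_list (n^q) (map (\<lambda>s. op_sup n q s H) [k+1..<k+j+1])"

lemma tau_string_factors_carrier:
  "f \<in> carrier_mat n n \<Longrightarrow> F \<in> carrier_mat n n \<Longrightarrow> k < q \<Longrightarrow>
   set ([op_sup n q 0 f] @ map (\<lambda>s. op_sup n q s F) [1..<k+1]) \<subseteq> carrier_mat (n^q) (n^q)"
  by (auto intro!: op_sup_carrier)

lemma beta_string_factors_carrier:
  "H \<in> carrier_mat n n \<Longrightarrow> k + j < q \<Longrightarrow>
   set (map (\<lambda>s. op_sup n q s H) [k+1..<k+j+1]) \<subseteq> carrier_mat (n^q) (n^q)"
  by (auto intro!: op_sup_carrier)

lemma tau_string_carrier:
  "f \<in> carrier_mat n n \<Longrightarrow> F \<in> carrier_mat n n \<Longrightarrow> k < q \<Longrightarrow> tau_string n q k f F \<in> carrier_mat (n^q) (n^q)"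
  unfolding tau_string_def by (intro mat_prod_list_carrier tau_string_factors_carrier)

lemma beta_string_carrier:
  "H \<in> carrier_mat n n \<Longrightarrow> k + j < q \<Longrightarrow> beta_string n q k j H \<in> carrier_mat (n^q) (n^q)"
  unfolding beta_string_def by (intro mat_prod_list_carrier beta_string_factors_carrier)

lemma op_string_eq:
  assumes f: "f \<in> carrier_mat n n" and F: "F \<in> carrier_mat n n" and H: "H \<in> carrier_mat n n"
    and mid: "set mid \<subseteq> carrier_mat (n^(m1+m2+1)) (n^(m1+m2+1))"
  shows "op_string n m1 m2 f F H mid = tau_string n (m1+m2+1) m1 f F
           * (mat_prod_list (n^(m1+m2+1)) mid * beta_string n (m1+m2+1) m1 m2 H)"
proof -
  define q where "q = m1 + m2 + 1"
  define fs where "fs = [op_sup n q 0 f] @ map (\<lambda>s. op_sup n q s F) [1..<m1+1]"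
  define hs where "hs = map (\<lambda>s. op_sup n q s H) [m1+1..<m1+m2+1]"
  have "op_string n m1 m2 f F H mid = mat_prod_list (n^q) (fs @ (mid @ hs))"
    unfolding op_string_def Let_def fs_def hs_def q_def by simp
  moreover have "m1 + m2 < q" unfolding q_def by simp
  then have "set fs \<subseteq> carrier_mat (n^q) (n^q)" "set hs \<subseteq> carrier_mat (n^q) (n^q)"
    unfolding fs_def hs_def using f F H by (auto intro!: op_sup_carrier)
  moreover have "tau_string n q m1 f F = mat_prod_list (n^q) fs"
    unfolding tau_string_def fs_def ..
  moreover have "beta_string n q m1 m2 H = mat_prod_list (n^q) hs"
    unfolding beta_string_def hs_def q_def ..
  ultimately show ?thesis
    using mid unfolding q_def[symmetric] by (simp add: mat_prod_list_append)
qed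

lemma kron_mat_prod_list_one:
  assumes "set xs \<subseteq> carrier_mat N N"
  shows "kron (mat_prod_list N xs) (1\<^sub>m m) = mat_prod_list (N*m) (map (\<lambda>x. kron x (1\<^sub>m m)) xs)"
  using assms
proof (induction xs)
  case Nil then show ?case by (simp add: mat_prod_list_def kron_one_one)
next
  case (Cons x xs)
  have "kron (x * mat_prod_list N xs) (1\<^sub>m m) = kron x (1\<^sub>m m) * kron (mat_prod_list N xs) (1\<^sub>m m)"
    using Cons.prems kron_mult[OF _ one_carrier_mat mat_prod_list_carrier one_carrier_mat, of x N N xs m]
    by simp
  then show ?case using Cons by (simp add: mat_prod_list_def)
qed

lemma tau_string_lift:
  assumes "f \<in> carrier_mat n n" "F \<in> carrier_mat n n" "k < q"
  shows "kron (tau_string n q k f F) (1\<^sub>m (n^j)) = tau_string n (q+j) k f F"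
proof -
  have "map (\<lambda>x. kron x (1\<^sub>m (n^j))) ([op_sup n q 0 f] @ map (\<lambda>s. op_sup n q s F) [1..<k+1])
      = [op_sup n (q+j) 0 f] @ map (\<lambda>s. op_sup n (q+j) s F) [1..<k+1]"
    using assms by (auto simp: op_sup_lift simp del: upt_Suc)
  then show ?thesis
    unfolding tau_string_def kron_mat_prod_list_one[OF tau_string_factors_carrier[OF assms]] power_add
    by (simp only:)
qed

lemma beta_string_lift:
  assumes "H \<in> carrier_mat n n" "k + j < q"
  shows "kron (beta_string n q k j H) (1\<^sub>m (n^i)) = beta_string n (q+i) k j H"
proof -
  have "map (\<lambda>x. kron x (1\<^sub>m (n^i))) (map (\<lambda>s. op_sup n q s H) [k+1..<k+j+1])
      = map (\<lambda>s. op_sup n (q+i) s H) [k+1..<k+j+1]"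
    using assms by (auto simp: op_sup_lift simp del: upt_Suc)
  then show ?thesis
    unfolding beta_string_def kron_mat_prod_list_one[OF beta_string_factors_carrier[OF assms]] power_add
    by (simp only:)
qed

lemma tau_string_Suc:
  assumes f: "f \<in> carrier_mat n n" and F: "F \<in> carrier_mat n n"
  shows "kron (tau_string n (Suc k) k f F) (1\<^sub>m n) * op_sup n (Suc (Suc k)) (Suc k) F
       = tau_string n (Suc (Suc k)) (Suc k) f F"
  using tau_string_lift[OF f F, of k "Suc k" 1]
    mat_prod_list_snoc[OF tau_string_factors_carrier[OF f F, of k "Suc (Suc k)"] op_sup_carrier[OF F]]
  by (simp add: tau_string_def)

lemma beta_string_Suc:
  assumes H: "H \<in> carrier_mat n n" and q: "k + j + 1 < q"
  shows "op_sup n q (k + j + 1) H * beta_string n q k j H = beta_string n q k (Suc j) H"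
proof -
  have "op_sup n q (k + j + 1) H * beta_string n q k j H = beta_string n q k j H * op_sup n q (k + j + 1) H"
    unfolding beta_string_def using H q
    by (intro mat_prod_list_commute[symmetric] op_sup_carrier beta_string_factors_carrier)
       (auto intro!: op_sup_commute)
  also have "\<dots> = beta_string n q k (Suc j) H"
    using mat_prod_list_snoc[OF beta_string_factors_carrier[of H n k j q] op_sup_carrier[OF H q]] H q
    by (simp add: beta_string_def)
  finally show ?thesis .
qed

section \<open>Iterated derivatives of \<open>tr (f \<Phi>)\<close>\<close>

lemma nderiv_tau_mtrace:
  assumes f: "f \<in> carrier_mat n n" and F: "F \<in> carrier_mat n n" and H: "H \<in> carrier_mat n n"
    and Z: "mtrace (exp_neg F t * exp_neg H b) \<noteq> 0"
  shows "nderiv k (\<lambda>t. mtrace (f * Phi F H t b)) t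
       = (-1)^k * mtrace (tau_string n (Suc k) k f F * tens_pow (Suc k) (Phi F H t b))"
proof (rule nderiv_eq_on_open)
  show "open {t. mtrace (exp_neg F t * exp_neg H b) \<noteq> 0}"
    by (rule open_mtrace_nonzero[OF has_mat_derivative_exp_neg_mult_tau[OF F H]])
  show "mtrace (f * Phi F H t b) = (-1)^0 * mtrace (tau_string n (Suc 0) 0 f F * tens_pow (Suc 0) (Phi F H t b))"
    for t using f by (simp add: tau_string_def op_sup_def op_on_def mat_prod_list_def)
  fix k t assume "t \<in> {t. mtrace (exp_neg F t * exp_neg H b) \<noteq> 0}"
  then have Zt: "mtrace (exp_neg F t * exp_neg H b) \<noteq> 0" by simp
  have "((\<lambda>s. mtrace (tau_string n (Suc k) k f F * tens_pow (Suc k) (Phi F H s b))) has_vector_derivative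
      - mtrace (tau_string n (Suc (Suc k)) (Suc k) f F * tens_pow (Suc (Suc k)) (Phi F H t b))) (at t)"
    using mtrace_tens_pow_has_vector_derivative_left[where \<Phi> = "\<lambda>s. Phi F H s b",
        OF F tau_string_carrier[OF f F, of k "Suc k"] _ Phi_has_derivative_tau[OF F H Zt] mtrace_Phi[OF F H Zt]]
    by (simp add: tau_string_Suc[OF f F] del: tens_pow.simps)
  from has_vector_derivative_mult_right[OF this, of "(-1)^k"]
  show "((\<lambda>t. (-1)^k * mtrace (tau_string n (Suc k) k f F * tens_pow (Suc k) (Phi F H t b))) has_vector_derivative
      (-1)^Suc k * mtrace (tau_string n (Suc (Suc k)) (Suc k) f F * tens_pow (Suc (Suc k)) (Phi F H t b))) (at t)"
    by simp
qed (use Z in simp)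

lemma op_sup_mult_kron_beta_tau_string:
  assumes f: "f \<in> carrier_mat n n" and F: "F \<in> carrier_mat n n" and H: "H \<in> carrier_mat n n"
    and q_eq: "q = m1 + j + 1"
  shows "op_sup n (Suc q) q H * kron (beta_string n q m1 j H * tau_string n q m1 f F) (1\<^sub>m n)
       = beta_string n (Suc q) m1 (Suc j) H * tau_string n (Suc q) m1 f F"
proof -
  have q: "m1 + j < q" using q_eq by simp
  note cB = beta_string_carrier[OF H q]
  have cT: "tau_string n q m1 f F \<in> carrier_mat (n^q) (n^q)" using q by (simp add: tau_string_carrier[OF f F])
  have "kron (beta_string n q m1 j H * tau_string n q m1 f F) (1\<^sub>m n)
      = kron (beta_string n q m1 j H) (1\<^sub>m n) * kron (tau_string n q m1 f F) (1\<^sub>m n)"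
    using kron_mult[OF cB one_carrier_mat[of n] cT one_carrier_mat[of n]] by simp
  also have "\<dots> = beta_string n (Suc q) m1 j H * tau_string n (Suc q) m1 f F"
    using beta_string_lift[OF H q, of 1] tau_string_lift[OF f F, of m1 q 1] q by simp
  finally have "kron (beta_string n q m1 j H * tau_string n q m1 f F) (1\<^sub>m n)
      = beta_string n (Suc q) m1 j H * tau_string n (Suc q) m1 f F" .
  moreover have "op_sup n (Suc q) q H * beta_string n (Suc q) m1 j H = beta_string n (Suc q) m1 (Suc j) H"
    using beta_string_Suc[OF H, of m1 j "Suc q"] q_eq by simp
  ultimately show ?thesis
    using op_sup_carrier[OF H, of q "Suc q"] beta_string_carrier[OF H, of m1 j "Suc q"]
      tau_string_carrier[OF f F, of m1 "Suc q"] q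
    by (simp add: assoc_mult_mat[symmetric, of _ "n^Suc q" "n^Suc q" _ "n^Suc q" _ "n^Suc q"])
qed

lemma nderiv_beta_mtrace:
  assumes f: "f \<in> carrier_mat n n" and F: "F \<in> carrier_mat n n" and H: "H \<in> carrier_mat n n"
    and Z: "mtrace (exp_neg F t * exp_neg H b) \<noteq> 0"
  shows "nderiv j (\<lambda>b. nderiv m1 (\<lambda>t. mtrace (f * Phi F H t b)) t) b
       = (-1)^(m1 + j) * mtrace (beta_string n (Suc (m1 + j)) m1 j H * tau_string n (Suc (m1 + j)) m1 f F
                                 * tens_pow (Suc (m1 + j)) (Phi F H t b))"
proof (rule nderiv_eq_on_open)
  show "open {b. mtrace (exp_neg F t * exp_neg H b) \<noteq> 0}"
    by (rule open_mtrace_nonzero[OF has_mat_derivative_exp_neg_mult_beta[OF F H]])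
  fix b assume "b \<in> {b. mtrace (exp_neg F t * exp_neg H b) \<noteq> 0}"
  then have Zb: "mtrace (exp_neg F t * exp_neg H b) \<noteq> 0" by simp
  show "nderiv m1 (\<lambda>t. mtrace (f * Phi F H t b)) t
      = (-1)^(m1 + 0) * mtrace (beta_string n (Suc (m1 + 0)) m1 0 H * tau_string n (Suc (m1 + 0)) m1 f F
                                * tens_pow (Suc (m1 + 0)) (Phi F H t b))"
    using nderiv_tau_mtrace[OF f F H Zb, of m1] tau_string_carrier[OF f F, of m1 "Suc m1"]
    by (simp add: beta_string_def mat_prod_list_def del: tens_pow.simps)
next
  fix j b assume "b \<in> {b. mtrace (exp_neg F t * exp_neg H b) \<noteq> 0}"
  then have Zb: "mtrace (exp_neg F t * exp_neg H b) \<noteq> 0" by simp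
  define q where "q = m1 + j + 1"
  have "beta_string n q m1 j H * tau_string n q m1 f F \<in> carrier_mat (n^q) (n^q)"
    using beta_string_carrier[OF H, of m1 j q] tau_string_carrier[OF f F, of m1 q] unfolding q_def by simp
  from mtrace_tens_pow_has_vector_derivative_right[where \<Phi> = "\<lambda>s. Phi F H t s",
      OF H this _ Phi_has_derivative_beta[OF F H Zb] mtrace_Phi[OF F H Zb]]
  have "((\<lambda>s. mtrace (beta_string n q m1 j H * tau_string n q m1 f F * tens_pow q (Phi F H t s))) has_vector_derivative
      - mtrace (beta_string n (Suc q) m1 (Suc j) H * tau_string n (Suc q) m1 f F * tens_pow (Suc q) (Phi F H t b))) (at b)"
    unfolding op_sup_mult_kron_beta_tau_string[OF f F H q_def] unfolding q_def by (simp del: tens_pow.simps)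
  from has_vector_derivative_mult_right[OF this, of "(-1)^(m1 + j)"]
  show "((\<lambda>b. (-1)^(m1 + j) * mtrace (beta_string n (Suc (m1 + j)) m1 j H * tau_string n (Suc (m1 + j)) m1 f F
                                 * tens_pow (Suc (m1 + j)) (Phi F H t b))) has_vector_derivative
      (-1)^(m1 + Suc j) * mtrace (beta_string n (Suc (m1 + Suc j)) m1 (Suc j) H * tau_string n (Suc (m1 + Suc j)) m1 f F
                                 * tens_pow (Suc (m1 + Suc j)) (Phi F H t b))) (at b)"
    unfolding q_def by simp
qed (use Z in simp)

lemma nderiv_mtrace_Phi:
  assumes f: "f \<in> carrier_mat n n" and F: "F \<in> carrier_mat n n" and H: "H \<in> carrier_mat n n"
    and Z: "mtrace (exp_neg F \<tau> * exp_neg H \<beta>) \<noteq> 0"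
  shows "nderiv m2 (\<lambda>b. nderiv m1 (\<lambda>t. mtrace (f * Phi F H t b)) \<tau>) \<beta>
       = (-1)^(m1 + m2) * mtrace (op_string n m1 m2 f F H [tens_pow (m1 + m2 + 1) (Phi F H \<tau> \<beta>)])"
proof -
  define q T B A where "q = m1 + m2 + 1" and "T = tens_pow q (Phi F H \<tau> \<beta>)"
    and "B = beta_string n q m1 m2 H" and "A = tau_string n q m1 f F"
  have cT: "T \<in> carrier_mat (n^q) (n^q)" unfolding T_def by (rule tens_pow_carrier[OF Phi_carrier[OF F H]])
  have "m1 + m2 < q" unfolding q_def by simp
  then have cB: "B \<in> carrier_mat (n^q) (n^q)" and cA: "A \<in> carrier_mat (n^q) (n^q)"
    unfolding A_def B_def using f F H by (auto intro!: beta_string_carrier tau_string_carrier)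
  have "nderiv m2 (\<lambda>b. nderiv m1 (\<lambda>t. mtrace (f * Phi F H t b)) \<tau>) \<beta> = (-1)^(m1 + m2) * mtrace (B * A * T)"
    using nderiv_beta_mtrace[OF f F H Z, of m2 m1] unfolding A_def B_def T_def q_def by simp
  also have "mtrace (B * A * T) = mtrace (A * (T * B))"
    using cA cB cT mtrace_mult_commute[of B "n^q" "n^q" "A * T"] mtrace_mult_commute[of A "n^q" "n^q" "T * B"]
    by simp
  also have "A * (T * B) = op_string n m1 m2 f F H [T]"
    using op_string_eq[OF f F H, of "[T]" m1 m2] cT
    unfolding A_def B_def q_def by (simp add: mat_prod_list_def q_def[symmetric])
  finally show ?thesis unfolding T_def q_def .
qed

lemma op_string_carrier:
  assumes f: "f \<in> carrier_mat n n" and F: "F \<in> carrier_mat n n" and H: "H \<in> carrier_mat n n"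
    and mid: "set mid \<subseteq> carrier_mat (n^(m1+m2+1)) (n^(m1+m2+1))"
  shows "op_string n m1 m2 f F H mid \<in> carrier_mat (n^(m1+m2+1)) (n^(m1+m2+1))"
proof -
  define q where "q = m1 + m2 + 1"
  have "m1 + m2 < q" unfolding q_def by simp
  then have "beta_string n q m1 m2 H \<in> carrier_mat (n^q) (n^q)" "tau_string n q m1 f F \<in> carrier_mat (n^q) (n^q)"
    using f F H by (auto intro!: beta_string_carrier tau_string_carrier)
  then show ?thesis
    using op_string_eq[OF f F H mid] mat_prod_list_carrier[OF mid] unfolding q_def[symmetric] by simp
qed

lemma op_string_smult_one:
  assumes f: "f \<in> carrier_mat n n" and F: "F \<in> carrier_mat n n" and H: "H \<in> carrier_mat n n"
  shows "op_string n m1 m2 f F H [c \<cdot>\<^sub>m 1\<^sub>m (n^(m1+m2+1))] = c \<cdot>\<^sub>m op_string n m1 m2 f F H []"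
proof -
  define q where "q = m1 + m2 + 1"
  have "m1 + m2 < q" unfolding q_def by simp
  then have cB: "beta_string n q m1 m2 H \<in> carrier_mat (n^q) (n^q)"
    and cA: "tau_string n q m1 f F \<in> carrier_mat (n^q) (n^q)"
    using f F H by (auto intro!: beta_string_carrier tau_string_carrier)
  then show ?thesis
    using op_string_eq[OF f F H, of "[c \<cdot>\<^sub>m 1\<^sub>m (n^q)]" m1 m2] op_string_eq[OF f F H, of "[]" m1 m2]
    unfolding q_def[symmetric]
    by (simp add: mat_prod_list_def mult_smult_assoc_mat[of _ "n^q" "n^q"] mult_smult_distrib[of _ "n^q" "n^q"])
qed

lemma Phi_zero:
  assumes F: "F \<in> carrier_mat n n" and H: "H \<in> carrier_mat n n" and n: "n \<noteq> 0"
  shows "mtrace (exp_neg F 0 * exp_neg H 0) \<noteq> 0" and "Phi F H 0 0 = (1 / of_nat n) \<cdot>\<^sub>m 1\<^sub>m n"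
proof -
  have "exp_neg F 0 * exp_neg H 0 = 1\<^sub>m n"
    using exp_neg_zero[OF F] exp_neg_zero[OF H] by simp
  then show "mtrace (exp_neg F 0 * exp_neg H 0) \<noteq> 0" and "Phi F H 0 0 = (1 / of_nat n) \<cdot>\<^sub>m 1\<^sub>m n"
    using n by (simp_all add: Phi_eq mtrace_one)
qed

lemma nderiv_mtrace_Phi_zero:
  assumes f: "f \<in> carrier_mat n n" and F: "F \<in> carrier_mat n n" and H: "H \<in> carrier_mat n n"
    and n: "n \<noteq> 0"
  shows "nderiv m2 (\<lambda>b. nderiv m1 (\<lambda>t. mtrace (f * Phi F H t b)) 0) 0
       = (-1)^(m1 + m2) * ntr n (m1 + m2 + 1) (op_string n m1 m2 f F H [])"
proof -
  define q where "q = m1 + m2 + 1"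
  have "tens_pow q (Phi F H 0 0) = (1 / of_nat n)^q \<cdot>\<^sub>m 1\<^sub>m (n^q)"
    by (simp add: Phi_zero(2)[OF F H n] tens_pow_smult_one)
  then have "op_string n m1 m2 f F H [tens_pow (m1 + m2 + 1) (Phi F H 0 0)]
      = (1 / of_nat n)^q \<cdot>\<^sub>m op_string n m1 m2 f F H []"
    unfolding q_def using op_string_smult_one[OF f F H] by simp
  moreover have "op_string n m1 m2 f F H [] \<in> carrier_mat (n^q) (n^q)"
    unfolding q_def by (rule op_string_carrier[OF f F H]) simp
  ultimately show ?thesis
    using nderiv_mtrace_Phi[OF f F H Phi_zero(1)[OF F H n], of m2 m1] n
    unfolding ntr_def mtrace_one q_def[symmetric] by (simp add: mtrace_smult field_simps)
qed

theorem lemma2: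
  fixes n m1 m2 :: nat and f F H :: "complex mat" and \<tau> \<beta> :: real
  assumes "f \<in> carrier_mat n n" and "F \<in> carrier_mat n n" and "H \<in> carrier_mat n n"
    and "mtrace (mexp ((- complex_of_real \<tau>) \<cdot>\<^sub>m F) * mexp ((- complex_of_real \<beta>) \<cdot>\<^sub>m H)) \<noteq> 0"
  shows "(nderiv m2 (\<lambda>b. nderiv m1 (\<lambda>t. mtrace (f * Phi F H t b)) \<tau>) \<beta>
           = (-1) ^ (m1 + m2) *
             mtrace (op_string n m1 m2 f F H [tens_pow (m1 + m2 + 1) (Phi F H \<tau> \<beta>)]))
    \<and> (nderiv m2 (\<lambda>b. nderiv m1 (\<lambda>t. mtrace (f * Phi F H t b)) 0) 0
           = (-1) ^ (m1 + m2) * ntr n (m1 + m2 + 1) (op_string n m1 m2 f F H []))"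
proof -
  note f = assms(1) and F = assms(2) and H = assms(3) and Z = assms(4)
  have "n \<noteq> 0"
  proof
    assume "n = 0"
    then have "dim_row (exp_neg F \<tau>) = 0" using exp_neg_carrier[OF F] by blast
    then show False using Z by (simp add: mtrace_def)
  qed
  then show ?thesis
    using nderiv_mtrace_Phi[OF f F H Z] nderiv_mtrace_Phi_zero[OF f F H] by simp
qed

end
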